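(* There is a function $C\colon(0,1]\to(0,\infty)$ with the following property. Let $\Sigma\subset\mathbb R^3$ be a smooth surface bounding a convex set $K$ with $B(0,\varepsilon)\subset K\subset B(0,1)$ for some $\varepsilon\in(0,1]$. Then every shortest path $\gamma$ on $\Sigma$ has total curvature $\Phi(\gamma)\le C(\varepsilon)$.
   Context: $B(0,r)$ is the open ball of radius $r$ centered at the origin. A shortest path on $\Sigma$ between two points is a curve in $\Sigma$ whose length equals the intrinsic distance in $\Sigma$ between them (the infimum of lengths of curves in $\Sigma$ joining them); such curves, parametrized by arc length, are smooth. The total curvature of a smooth unit-speed curve is $\Phi(\gamma)=\int|\gamma''(s)|\,ds$. *)

theory Defs
  imports "HOL-Analysis.Analysis"
begin

definition curve_length :: "(real \<Rightarrow> 'a::metric_space) \<Rightarrow> real \<Rightarrow> real \<Rightarrow> ereal" where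
  "curve_length g a b =
     (SUP p \<in> {(n, t). t 0 = a \<and> t n = b \<and> (\<forall>i<n. t i \<le> t (Suc i))}.
        ereal (\<Sum>i<fst p. dist (g (snd p i)) (g (snd p (Suc i)))))"

definition intrinsic_dist :: "'a::metric_space set \<Rightarrow> 'a \<Rightarrow> 'a \<Rightarrow> ereal" where
  "intrinsic_dist S x y =
     (INF g \<in> {g. path g \<and> path_image g \<subseteq> S \<and> pathstart g = x \<and> pathfinish g = y}.
        curve_length g 0 1)"

fun Ck_on :: "nat \<Rightarrow> 'a::euclidean_space set \<Rightarrow> ('a \<Rightarrow> real) \<Rightarrow> bool" where
  "Ck_on 0 U f = continuous_on U f"
| "Ck_on (Suc k) U f = (f differentiable_on U \<and>
      (\<forall>b\<in>Basis. Ck_on k U (\<lambda>x. frechet_derivative f (at x) b)))"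

definition smooth_fun_on :: "'a::euclidean_space set \<Rightarrow> ('a \<Rightarrow> real) \<Rightarrow> bool" where
  "smooth_fun_on U f = (\<forall>k. Ck_on k U f)"

definition smooth_surface :: "(real^3) set \<Rightarrow> bool" where
  "smooth_surface S = (\<forall>p\<in>S. \<exists>U f. open U \<and> p \<in> U \<and> smooth_fun_on U f \<and>
      (\<forall>x\<in>U. frechet_derivative f (at x) \<noteq> (\<lambda>v. 0)) \<and>
      S \<inter> U = {x\<in>U. f x = 0})"

end

theory Submission
  imports Defs
begin

text \<open>A shortest path on the boundary of the convex body \<open>K\<close> is a geodesic whose acceleration
  points into \<open>K\<close>: \<open>\<gamma>'' = k \<nu>\<close> with \<open>k \<le> 0\<close>, where \<open>\<nu>\<close> is the outer unit normal. Since
  \<open>ball 0 \<epsilon> \<subseteq> K\<close>, every outer normal at \<open>\<gamma>\<close> satisfies \<open>\<gamma> \<bullet> \<nu> \<ge> \<epsilon>\<close>, hence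
  \<open>\<epsilon> |\<gamma>''| \<le> - \<gamma>'' \<bullet> \<gamma>\<close>. Integrating, with \<open>(\<gamma>' \<bullet> \<gamma>)' = 1 + \<gamma>'' \<bullet> \<gamma>\<close>, gives
  \<open>\<epsilon> \<Phi>(\<gamma>) \<le> L + 2\<close>. Finally \<open>L \<le> 54\<close>: nearest-point projection onto \<open>K\<close> maps an explicit
  detour outside the unit ball to a boundary curve of length at most 54 between any two
  boundary points. So \<open>C(\<epsilon>) = 56 / \<epsilon>\<close> works.

  The geodesic property is proved variationally. If \<open>\<gamma>''\<close> had a positive component along a
  tangent vector \<open>w\<close>, pushing \<open>\<gamma>\<close> outwards along \<open>w + M \<gamma>\<close> with a small bump would keep it
  outside the interior of \<open>K\<close> and make it shorter; projecting back onto the boundary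
  contradicts minimality. Smoothness of the boundary is used only to make the outer normal
  unique, hence continuous along \<open>\<gamma>\<close>.\<close>

section \<open>Length majorants\<close>

text \<open>\<open>F\<close> majorizes the arclength of \<open>g\<close>. All length estimates go through such majorants, which
  glue and survive 1-Lipschitz maps, rather than through additivity of \<open>curve_length\<close>.\<close>

definition dist_dominated :: "(real \<Rightarrow> 'a::metric_space) \<Rightarrow> (real \<Rightarrow> real) \<Rightarrow> real \<Rightarrow> real \<Rightarrow> bool" where
  "dist_dominated g F a b \<longleftrightarrow> (\<forall>x y. a \<le> x \<longrightarrow> x \<le> y \<longrightarrow> y \<le> b \<longrightarrow> dist (g x) (g y) \<le> F y - F x)"

lemma dist_dominatedI:
  "(\<And>x y. a \<le> x \<Longrightarrow> x \<le> y \<Longrightarrow> y \<le> b \<Longrightarrow> dist (g x) (g y) \<le> F y - F x) \<Longrightarrow> dist_dominated g F a b"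
  by (simp add: dist_dominated_def)

lemma dist_dominatedD:
  "dist_dominated g F a b \<Longrightarrow> a \<le> x \<Longrightarrow> x \<le> y \<Longrightarrow> y \<le> b \<Longrightarrow> dist (g x) (g y) \<le> F y - F x"
  by (simp add: dist_dominated_def)

lemma dist_dominated_subinterval:
  "dist_dominated g F a b \<Longrightarrow> a \<le> c \<Longrightarrow> d \<le> b \<Longrightarrow> dist_dominated g F c d"
  by (simp add: dist_dominated_def)

lemma dist_dominated_cong:
  assumes "dist_dominated g F a b" "\<And>t. t \<in> {a..b} \<Longrightarrow> h t = g t" "\<And>t. t \<in> {a..b} \<Longrightarrow> G t = F t + c"
  shows "dist_dominated h G a b"
  using assms by (auto simp: dist_dominated_def)

lemma dist_dominated_join:
  assumes "dist_dominated g F a m" "dist_dominated g F m b"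
  shows "dist_dominated g F a b"
proof (rule dist_dominatedI)
  fix x y assume xy: "a \<le> x" "x \<le> y" "y \<le> b"
  consider "y \<le> m" | "m \<le> x" | "x < m" "m < y" by linarith
  then show "dist (g x) (g y) \<le> F y - F x"
  proof cases
    case 3
    have "dist (g x) (g y) \<le> dist (g x) (g m) + dist (g m) (g y)" by (rule dist_triangle)
    also have "\<dots> \<le> (F m - F x) + (F y - F m)"
      using 3 xy by (intro add_mono dist_dominatedD[OF assms(1)] dist_dominatedD[OF assms(2)]) auto
    finally show ?thesis by simp
  qed (use xy assms in \<open>auto dest: dist_dominatedD\<close>)
qed

lemma dist_dominated_imp_continuous_on:
  assumes dom: "dist_dominated g F a b" and F: "continuous_on {a..b} F"
  shows "continuous_on {a..b} g"
  unfolding continuous_on_iff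
proof (intro ballI allI impI)
  fix x e assume x: "x \<in> {a..b}" and e: "0 < (e::real)"
  then obtain d where d: "d > 0" "\<And>x'. x' \<in> {a..b} \<Longrightarrow> dist x' x < d \<Longrightarrow> dist (F x') (F x) < e"
    using F unfolding continuous_on_iff by metis
  have "dist (g x') (g x) < e" if x': "x' \<in> {a..b}" "dist x' x < d" for x'
  proof -
    have "dist (g x') (g x) \<le> \<bar>F x' - F x\<bar>"
      using x x' dist_dominatedD[OF dom, of x' x] dist_dominatedD[OF dom, of x x']
      by (cases "x' \<le> x") (auto simp: dist_commute)
    also have "\<dots> < e" using d(2)[OF x'] by (simp add: dist_real_def)
    finally show ?thesis .
  qed
  then show "\<exists>d>0. \<forall>x'\<in>{a..b}. dist x' x < d \<longrightarrow> dist (g x') (g x) < e"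
    using d(1) by blast
qed

lemma dist_dominated_if_derivative_bound:
  fixes g :: "real \<Rightarrow> 'a::real_normed_vector"
  assumes "continuous_on {a..b} g" "continuous_on {a..b} F"
    and "\<And>t. t \<in> {a<..<b} \<Longrightarrow> (g has_vector_derivative g' t) (at t)"
    and "\<And>t. t \<in> {a<..<b} \<Longrightarrow> (F has_real_derivative F' t) (at t)"
    and "\<And>t. t \<in> {a<..<b} \<Longrightarrow> norm (g' t) \<le> F' t"
  shows "dist_dominated g F a b"
proof (rule dist_dominatedI)
  fix x y assume xy: "a \<le> x" "x \<le> y" "y \<le> b"
  show "dist (g x) (g y) \<le> F y - F x"
  proof (cases "x = y")
    case False
    then have "norm (g y - g x) \<le> F y - F x"
      using xy assms
      by (intro differentiable_bound_general[where f' = g' and \<phi>' = F'])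
         (auto intro: continuous_on_subset simp: has_real_derivative_iff_has_vector_derivative[symmetric])
    then show ?thesis by (simp add: dist_norm norm_minus_commute)
  qed simp
qed

lemma dist_dominated_line:
  fixes v w :: "'a::real_normed_vector"
  assumes "norm w \<le> k"
  shows "dist_dominated (\<lambda>t. v + t *\<^sub>R w) (\<lambda>t. k * t) a b"
proof (rule dist_dominatedI)
  fix x y :: real assume "x \<le> y"
  then have "dist (v + x *\<^sub>R w) (v + y *\<^sub>R w) = (y - x) * norm w"
    by (simp add: dist_norm flip: scaleR_diff_left)
  also have "\<dots> \<le> (y - x) * k" using \<open>x \<le> y\<close> assms by (intro mult_left_mono) auto
  finally show "dist (v + x *\<^sub>R w) (v + y *\<^sub>R w) \<le> k * y - k * x" by (simp add: algebra_simps)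
qed

text \<open>Splicing a piece \<open>c\<close> into \<open>g\<close> on \<open>[s\<^sub>1, s\<^sub>2]\<close>: the majorant follows \<open>G\<close> outside
  and \<open>F\<close> inside, shifted so that it stays continuous.\<close>

lemma dist_dominated_splice:
  assumes "a \<le> s1" "s1 \<le> s2" "s2 \<le> b"
    and g: "dist_dominated g G a b" and c: "dist_dominated c F s1 s2"
    and "c s1 = g s1" "c s2 = g s2"
  shows "dist_dominated (\<lambda>s. if s \<in> {s1..s2} then c s else g s)
           (\<lambda>s. G s + (F (max s1 (min s s2)) - G (max s1 (min s s2))) - (F s1 - G s1)) a b"
    (is "dist_dominated ?p ?H a b")
proof (rule dist_dominated_join[of _ _ _ s1])
  show "dist_dominated ?p ?H a s1"
    using assms by (intro dist_dominated_cong[OF dist_dominated_subinterval[OF g], where c=0]) auto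
  show "dist_dominated ?p ?H s1 b"
  proof (rule dist_dominated_join[of _ _ _ s2])
    show "dist_dominated ?p ?H s1 s2"
      using assms by (intro dist_dominated_cong[OF c, where c="G s1 - F s1"]) auto
    show "dist_dominated ?p ?H s2 b"
      using assms
      by (intro dist_dominated_cong[OF dist_dominated_subinterval[OF g], where c="F s2 - G s2 - (F s1 - G s1)"])
         auto
  qed
qed

lemma curve_length_le_dist_dominated:
  assumes "dist_dominated g F a b"
  shows "curve_length g a b \<le> ereal (F b - F a)"
  unfolding curve_length_def
proof (rule SUP_least, clarsimp)
  fix n and t :: "nat \<Rightarrow> real"
  assume a: "a = t 0" and b: "b = t n" and step: "\<forall>i<n. t i \<le> t (Suc i)"
  have mono: "t i \<le> t j" if "i \<le> j" "j \<le> n" for i j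
    using that by (induction j rule: dec_induct) (use step in \<open>auto intro: order_trans\<close>)
  have "(\<Sum>i<n. dist (g (t i)) (g (t (Suc i)))) \<le> (\<Sum>i<n. F (t (Suc i)) - F (t i))"
    using a b step mono by (intro sum_mono dist_dominatedD[OF assms]) auto
  also have "\<dots> = F (t n) - F (t 0)" by (rule sum_lessThan_telescope)
  finally show "(\<Sum>i<n. dist (g (t i)) (g (t (Suc i)))) \<le> F (t n) - F (t 0)" .
qed

lemma curve_length_ge_polygon:
  assumes "t 0 = a" "t n = b" "\<forall>i<n. t i \<le> t (Suc i)"
  shows "ereal (\<Sum>i<n. dist (g (t i)) (g (t (Suc i)))) \<le> curve_length g a b"
  unfolding curve_length_def by (rule SUP_upper2[where i="(n, t)"]) (use assms in auto)

lemma chord_ge_if_derivative_close: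
  fixes \<gamma> :: "real \<Rightarrow> 'a::real_normed_vector"
  assumes "x \<le> y" "continuous_on {x..y} \<gamma>"
    and "\<And>t. t \<in> {x<..<y} \<Longrightarrow> (\<gamma> has_vector_derivative \<gamma>' t) (at t)"
    and "norm (\<gamma>' x) = 1" "\<And>t. t \<in> {x<..<y} \<Longrightarrow> norm (\<gamma>' t - \<gamma>' x) \<le> \<eta>"
  shows "(1 - \<eta>) * (y - x) \<le> dist (\<gamma> x) (\<gamma> y)"
proof -
  have "dist_dominated (\<lambda>s. \<gamma> s - s *\<^sub>R \<gamma>' x) (\<lambda>s. \<eta> * s) x y"
    using assms
    by (intro dist_dominated_if_derivative_bound[where g'="\<lambda>t. \<gamma>' t - \<gamma>' x" and F'="\<lambda>_. \<eta>"])
       (auto intro!: continuous_intros derivative_eq_intros)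
  from dist_dominatedD[OF this, of x y]
  have close: "norm ((y - x) *\<^sub>R \<gamma>' x - (\<gamma> y - \<gamma> x)) \<le> \<eta> * (y - x)"
    using assms(1) by (simp add: dist_norm algebra_simps)
  have "y - x = norm ((y - x) *\<^sub>R \<gamma>' x)" using assms(1,4) by simp
  also have "\<dots> \<le> norm (\<gamma> y - \<gamma> x) + norm ((y - x) *\<^sub>R \<gamma>' x - (\<gamma> y - \<gamma> x))"
    by (rule norm_triangle_sub)
  finally show ?thesis
    using close by (simp add: dist_norm norm_minus_commute left_diff_distrib)
qed

lemma curve_length_ge_uniform_chords:
  assumes "0 < N" "0 \<le> h" "real N * h = b - a"
    and chords: "\<And>i. i < N \<Longrightarrow> c * h \<le> dist (g (a + real i * h)) (g (a + real (Suc i) * h))"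
  shows "ereal (c * (b - a)) \<le> curve_length g a b"
proof -
  have "c * (b - a) = (\<Sum>i<N. c * h)" using assms(3) by (simp flip: assms(3))
  also have "\<dots> \<le> (\<Sum>i<N. dist (g (a + real i * h)) (g (a + real (Suc i) * h)))"
    by (rule sum_mono) (use chords in auto)
  finally have "ereal (c * (b - a)) \<le> ereal (\<Sum>i<N. dist (g (a + real i * h)) (g (a + real (Suc i) * h)))"
    by simp
  also have "\<dots> \<le> curve_length g a b"
    using assms(1-3) by (intro curve_length_ge_polygon[where t="\<lambda>i. a + real i * h"]) (auto simp: distrib_right)
  finally show ?thesis .
qed

lemma curve_length_unit_speed_ge:
  fixes \<gamma> :: "real \<Rightarrow> 'a::real_normed_vector"
  assumes ab: "a \<le> b"
    and \<gamma>: "\<And>s. s \<in> {a..b} \<Longrightarrow> (\<gamma> has_vector_derivative \<gamma>' s) (at s within {a..b})"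
    and unit: "\<And>s. s \<in> {a..b} \<Longrightarrow> norm (\<gamma>' s) = 1"
    and cont: "continuous_on {a..b} \<gamma>'"
  shows "ereal (b - a) \<le> curve_length \<gamma> a b"
proof (rule ereal_le_epsilon2)
  fix e :: real assume e: "0 < e"
  define \<eta> where "\<eta> = e / (b - a + 1)"
  have \<eta>: "0 < \<eta>" "\<eta> * (b - a) \<le> e"
    using e ab by (auto simp: \<eta>_def field_simps)
  obtain d where d: "0 < d" "\<And>x x'. x \<in> {a..b} \<Longrightarrow> x' \<in> {a..b} \<Longrightarrow> dist x' x < d \<Longrightarrow> dist (\<gamma>' x') (\<gamma>' x) < \<eta>"
    using compact_uniformly_continuous[OF cont compact_Icc] \<eta>(1) unfolding uniformly_continuous_on_def by metis
  obtain N :: nat where "(b - a) / d < N"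
    using reals_Archimedean2 by blast
  moreover have "0 \<le> (b - a) / d" using ab d(1) by simp
  ultimately have N: "0 < N" "(b - a) / d < N" by (auto intro: of_nat_0_less_iff[THEN iffD1])
  define h where "h = (b - a) / N"
  have h: "0 \<le> h" "h < d" "real N * h = b - a" using N d ab by (auto simp: h_def field_simps)
  have \<gamma>_cont: "continuous_on {a..b} \<gamma>"
    using \<gamma> has_vector_derivative_continuous continuous_on_eq_continuous_within by blast
  have "ereal ((1 - \<eta>) * (b - a)) \<le> curve_length \<gamma> a b"
  proof (rule curve_length_ge_uniform_chords[OF N(1) h(1,3)])
    fix i assume "i < N"
    define x where "x = a + real i * h"
    have "real (Suc i) * h \<le> real N * h" using \<open>i < N\<close> h(1) by (intro mult_right_mono) auto
    then have sub: "{x..x + h} \<subseteq> {a..b}" using h by (auto simp: x_def distrib_right)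
    have "(1 - \<eta>) * (x + h - x) \<le> dist (\<gamma> x) (\<gamma> (x + h))"
    proof (rule chord_ge_if_derivative_close)
      show "x \<le> x + h" "norm (\<gamma>' x) = 1" using h(1) unit sub by auto
      show "continuous_on {x..x + h} \<gamma>" using \<gamma>_cont sub by (rule continuous_on_subset)
      fix s assume s: "s \<in> {x<..<x + h}"
      then have "s \<in> {a<..<b}" "x \<in> {a..b}" using sub h(1) by auto
      then show "(\<gamma> has_vector_derivative \<gamma>' s) (at s)"
        using \<gamma>[of s] by (simp add: at_within_Icc_at)
      have "dist (\<gamma>' s) (\<gamma>' x) < \<eta>"
        using s \<open>s \<in> {a<..<b}\<close> \<open>x \<in> {a..b}\<close> h(2) by (intro d(2)) (auto simp: dist_real_def)
      then show "norm (\<gamma>' s - \<gamma>' x) \<le> \<eta>" by (simp add: dist_norm)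
    qed
    then show "(1 - \<eta>) * h \<le> dist (\<gamma> (a + real i * h)) (\<gamma> (a + real (Suc i) * h))"
      by (simp add: x_def algebra_simps)
  qed
  moreover have "b - a - e \<le> (1 - \<eta>) * (b - a)" using \<eta>(2) by (simp add: left_diff_distrib)
  ultimately have "ereal (b - a - e) \<le> curve_length \<gamma> a b" by (metis ereal_less_eq(3) order_trans)
  then show "ereal (b - a) \<le> curve_length \<gamma> a b + ereal e"
    by (metis add_right_mono diff_add_cancel plus_ereal.simps(1))
qed

lemma intrinsic_dist_le_curve_length:
  assumes "path g" "path_image g \<subseteq> S" "pathstart g = x" "pathfinish g = y"
  shows "intrinsic_dist S x y \<le> curve_length g 0 1"
  unfolding intrinsic_dist_def by (rule INF_lower) (use assms in auto)

section \<open>Support normals and nearest-point projection\<close>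

definition support_normal :: "'a::real_inner set \<Rightarrow> 'a \<Rightarrow> 'a \<Rightarrow> bool" where
  "support_normal K q n \<longleftrightarrow> norm n = 1 \<and> (\<forall>x\<in>K. x \<bullet> n \<le> q \<bullet> n)"

lemma support_normal_exists:
  fixes K :: "'a::euclidean_space set"
  assumes "convex K" "interior K \<noteq> {}" "q \<in> frontier K"
  obtains n where "support_normal K q n"
proof -
  have "q \<in> closure K" "q \<notin> rel_interior K"
    using assms rel_interior_nonempty_interior[OF assms(2)] by (auto simp: frontier_def)
  then obtain a where a: "a \<noteq> 0" "\<And>y. y \<in> closure K \<Longrightarrow> a \<bullet> q \<le> a \<bullet> y"
    using supporting_hyperplane_relative_frontier[OF assms(1)] by metis
  have "support_normal K q (- (1 / norm a) *\<^sub>R a)"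
    unfolding support_normal_def
  proof (intro conjI ballI)
    fix x assume "x \<in> K"
    then have "a \<bullet> q \<le> a \<bullet> x" using a(2) closure_subset by blast
    then show "x \<bullet> (- (1 / norm a) *\<^sub>R a) \<le> q \<bullet> (- (1 / norm a) *\<^sub>R a)"
      by (simp add: divide_right_mono inner_commute)
  qed (use a in simp)
  then show ?thesis by (rule that)
qed

lemma support_normal_closure:
  assumes "support_normal K q n" "x \<in> closure K"
  shows "x \<bullet> n \<le> q \<bullet> n"
proof -
  have "closure K \<subseteq> {x. n \<bullet> x \<le> q \<bullet> n}"
    using assms(1) by (intro closure_minimal closed_halfspace_le) (auto simp: support_normal_def inner_commute)
  then show ?thesis using assms(2) by (auto simp: inner_commute)
qed

lemma support_normal_notin_interior:
  assumes "support_normal K q n" "q \<bullet> n \<le> z \<bullet> n"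
  shows "z \<notin> interior K"
proof
  assume "z \<in> interior K"
  then obtain r where r: "r > 0" "ball z r \<subseteq> K" using mem_interior by blast
  have n: "norm n = 1" using assms(1) by (simp add: support_normal_def)
  then have "z + (r/2) *\<^sub>R n \<in> K" using r by (auto simp: dist_norm)
  then have "(z + (r/2) *\<^sub>R n) \<bullet> n \<le> q \<bullet> n" using assms(1) by (auto simp: support_normal_def)
  moreover have "(z + (r/2) *\<^sub>R n) \<bullet> n = z \<bullet> n + r/2"
    using n by (simp add: inner_add_left power2_norm_eq_inner[symmetric])
  ultimately show False using r assms(2) by simp
qed

lemma closest_point_closure_in_frontier:
  fixes K :: "'a::euclidean_space set"
  assumes "convex K" "interior K \<noteq> {}" "z \<notin> interior K"
  shows "closest_point (closure K) z \<in> frontier K"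
proof -
  have int: "interior (closure K) = interior K" by (rule convex_interior_closure[OF assms(1)])
  then have ne: "interior (closure K) \<noteq> {}" using assms(2) by simp
  have "closest_point (closure K) z \<in> rel_frontier (closure K)"
    using assms(3) ne int affine_hull_nonempty_interior[OF ne] rel_interior_nonempty_interior[OF ne]
    by (intro closest_point_in_rel_frontier) auto
  then show ?thesis
    using rel_frontier_nonempty_interior[OF ne] int by (simp add: frontier_def)
qed

text \<open>Nearest-point projection onto \<open>closure K\<close> is 1-Lipschitz and maps the complement of
  \<open>interior K\<close> into \<open>frontier K\<close>.\<close>

lemma intrinsic_dist_frontier_le_projection:
  fixes K :: "'a::euclidean_space set" and p :: "real \<Rightarrow> 'a"
  assumes K: "convex K" "interior K \<noteq> {}"
    and "a \<le> b" and p: "dist_dominated p F a b" and F: "continuous_on {a..b} F"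
    and out: "\<And>t. t \<in> {a..b} \<Longrightarrow> p t \<notin> interior K"
  shows "intrinsic_dist (frontier K) (closest_point (closure K) (p a)) (closest_point (closure K) (p b))
           \<le> ereal (F b - F a)"
proof -
  define \<sigma> where "\<sigma> t = a + t * (b - a)" for t
  have \<sigma>: "\<sigma> x \<le> \<sigma> y" "\<sigma> x \<in> {a..b}" if "0 \<le> x" "x \<le> y" "y \<le> 1" for x y
    using that \<open>a \<le> b\<close> mult_right_mono[of x y "b - a"] mult_left_le_one_le[of "b - a" y]
      mult_nonneg_nonneg[of x "b - a"]
    by (auto simp: \<sigma>_def algebra_simps)
  define g where "g = closest_point (closure K) \<circ> p \<circ> \<sigma>"
  have dom: "dist_dominated g (F \<circ> \<sigma>) 0 1"
  proof (rule dist_dominatedI)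
    fix x y :: real assume xy: "0 \<le> x" "x \<le> y" "y \<le> 1"
    have "dist (g x) (g y) \<le> dist (p (\<sigma> x)) (p (\<sigma> y))"
      unfolding g_def o_def using K by (intro closest_point_lipschitz) (auto simp: convex_closure)
    also have "\<dots> \<le> F (\<sigma> y) - F (\<sigma> x)"
      using xy \<sigma>[of x y] \<sigma>[of y y] by (intro dist_dominatedD[OF p]) auto
    finally show "dist (g x) (g y) \<le> (F \<circ> \<sigma>) y - (F \<circ> \<sigma>) x" by simp
  qed
  have "continuous_on {0..1} (F \<circ> \<sigma>)"
    using \<sigma> unfolding \<sigma>_def by (intro continuous_on_compose continuous_intros continuous_on_subset[OF F]) auto
  then have "path g" unfolding path_def by (rule dist_dominated_imp_continuous_on[OF dom])
  moreover have "path_image g \<subseteq> frontier K"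
    using \<sigma> out by (auto simp: path_image_def g_def intro!: closest_point_closure_in_frontier[OF K])
  ultimately have "intrinsic_dist (frontier K) (g 0) (g 1) \<le> curve_length g 0 1"
    by (intro intrinsic_dist_le_curve_length) (auto simp: pathstart_def pathfinish_def)
  also have "\<dots> \<le> ereal ((F \<circ> \<sigma>) 1 - (F \<circ> \<sigma>) 0)" by (rule curve_length_le_dist_dominated[OF dom])
  finally show ?thesis by (simp add: g_def \<sigma>_def)
qed

lemma smooth_surface_local_gradient:
  assumes "smooth_surface S" "p \<in> S"
  obtains U f g where "open U" "p \<in> U" "continuous_on U f" "S \<inter> U = {x\<in>U. f x = 0}"
    "g \<noteq> 0" "(f has_derivative (\<lambda>y. y \<bullet> g)) (at p)"
proof -
  obtain U f where U: "open U" "p \<in> U" "smooth_fun_on U f"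
      "\<forall>x\<in>U. frechet_derivative f (at x) \<noteq> (\<lambda>v. 0)" "S \<inter> U = {x\<in>U. f x = 0}"
    using assms unfolding smooth_surface_def by blast
  have "Ck_on (Suc 0) U f" using U(3) unfolding smooth_fun_on_def by blast
  then have diff: "f differentiable_on U" by simp
  then have "f differentiable at p" using U(1,2) differentiable_on_eq_differentiable_at by blast
  then have Df: "(f has_derivative frechet_derivative f (at p)) (at p)"
    by (simp add: frechet_derivative_works)
  define g where "g = adjoint (frechet_derivative f (at p)) 1"
  have "frechet_derivative f (at p) = (\<lambda>y. y \<bullet> g)"
    using adjoint_works[OF has_derivative_linear[OF Df], of _ 1] by (simp add: g_def fun_eq_iff)
  moreover have "g \<noteq> 0" using U(2,4) calculation by auto
  ultimately show ?thesis
    using Df by (intro that[OF U(1,2) differentiable_imp_continuous_on[OF diff] U(5)]) simp_all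
qed

text \<open>Along the segment \<open>p + h t + \<tau> g\<close>, \<open>|\<tau>| \<le> a h\<close>, the function \<open>f\<close> equals \<open>\<tau> |g|\<^sup>2\<close> up to an
  error \<open>a |g|\<^sup>2 h / 2\<close> once \<open>h\<close> is small, so it changes sign.\<close>

lemma regular_zero_set_meets_transversal:
  fixes f :: "'a::real_inner \<Rightarrow> real"
  assumes U: "open U" "p \<in> U" and f: "continuous_on U f" "f p = 0"
    and Df: "(f has_derivative (\<lambda>y. y \<bullet> g)) (at p)" and "g \<noteq> 0" "t \<bullet> g = 0" "0 < a"
  obtains h \<tau> where "0 < h" "\<bar>\<tau>\<bar> \<le> a * h" "p + h *\<^sub>R t + \<tau> *\<^sub>R g \<in> U" "f (p + h *\<^sub>R t + \<tau> *\<^sub>R g) = 0"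
proof -
  define G where "G = norm g"
  define T where "T = norm t + a * G + 1"
  have G: "G > 0" using \<open>g \<noteq> 0\<close> by (simp add: G_def)
  then have T: "T > 0" using \<open>0 < a\<close> by (simp add: T_def add_nonneg_pos)
  define \<eta> where "\<eta> = a * G^2 / (2 * T)"
  have "\<eta> > 0" using \<open>0 < a\<close> G T by (simp add: \<eta>_def)
  then obtain d where d: "d > 0" "\<And>y. norm (y - p) < d \<Longrightarrow> \<bar>f y - f p - (y - p) \<bullet> g\<bar> \<le> \<eta> * norm (y - p)"
    using Df unfolding has_derivative_at_alt by (metis real_norm_def)
  obtain r where r: "r > 0" "ball p r \<subseteq> U" using U open_contains_ball by blast
  define h where "h = min d r / (2 * T)"
  have h: "h > 0" "h * T < d" "h * T < r" using d r T by (auto simp: h_def)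
  define v where "v \<tau> = h *\<^sub>R t + \<tau> *\<^sub>R g" for \<tau>
  have v: "norm (v \<tau>) \<le> h * T" if "\<bar>\<tau>\<bar> \<le> a * h" for \<tau>
  proof -
    have "norm (v \<tau>) \<le> h * norm t + \<bar>\<tau>\<bar> * G"
      using norm_triangle_ineq[of "h *\<^sub>R t" "\<tau> *\<^sub>R g"] h by (simp add: v_def G_def)
    also have "\<dots> \<le> h * norm t + a * h * G" using that G by (simp add: mult_right_mono)
    finally show ?thesis using h by (simp add: T_def algebra_simps)
  qed
  have in_U: "p + v \<tau> \<in> U" if "\<bar>\<tau>\<bar> \<le> a * h" for \<tau>
    using v[OF that] h r(2) by (auto simp: dist_norm)
  have f_near: "\<bar>f (p + v \<tau>) - \<tau> * G^2\<bar> \<le> a * G^2 * h / 2" if "\<bar>\<tau>\<bar> \<le> a * h" for \<tau>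
  proof -
    have "v \<tau> \<bullet> g = \<tau> * G^2"
      using \<open>t \<bullet> g = 0\<close> by (simp add: v_def inner_add_left G_def power2_norm_eq_inner)
    moreover have "\<bar>f (p + v \<tau>) - f p - v \<tau> \<bullet> g\<bar> \<le> \<eta> * (h * T)"
      using d(2)[of "p + v \<tau>"] v[OF that] h \<open>\<eta> > 0\<close> by (auto intro: order_trans mult_left_mono)
    ultimately show ?thesis using T f(2) by (simp add: \<eta>_def)
  qed
  have pos: "0 < a * G^2 * h" using \<open>0 < a\<close> G h by simp
  have "\<exists>\<tau>\<ge>-(a*h). \<tau> \<le> a*h \<and> f (p + v \<tau>) = 0"
  proof (rule IVT')
    have "\<bar>-(a*h)\<bar> \<le> a * h" "\<bar>a*h\<bar> \<le> a * h" using \<open>0 < a\<close> h(1) by auto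
    then show "f (p + v (-(a*h))) \<le> 0" "0 \<le> f (p + v (a*h))"
      using abs_le_D1[OF f_near[of "-(a*h)"]] abs_le_D2[OF f_near[of "a*h"]] pos
      by (simp_all add: algebra_simps)
    show "continuous_on {-(a*h)..a*h} (\<lambda>\<tau>. f (p + v \<tau>))"
      unfolding v_def by (rule continuous_on_compose2[OF f(1)]) (auto intro!: continuous_intros in_U[unfolded v_def])
  qed (use \<open>0 < a\<close> h in simp)
  then obtain \<tau> where \<tau>: "\<bar>\<tau>\<bar> \<le> a * h" "f (p + v \<tau>) = 0"
    by (metis abs_le_iff minus_le_iff)
  show ?thesis
    by (rule that[OF h(1) \<tau>(1)]) (use in_U[OF \<tau>(1)] \<tau>(2) in \<open>simp_all add: v_def add.assoc\<close>)
qed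

text \<open>A component \<open>t\<close> of \<open>n\<close> orthogonal to \<open>g\<close> would produce zeros \<open>p + h t + \<tau> g\<close> of \<open>f\<close>,
  i.e. points of \<open>closure K\<close>, beyond the supporting hyperplane.\<close>

lemma support_normal_parallel_gradient:
  fixes K :: "'a::real_inner set"
  assumes n: "support_normal K p n"
    and U: "open U" "p \<in> U" and f: "continuous_on U f" "f p = 0"
    and zeros: "\<And>x. x \<in> U \<Longrightarrow> f x = 0 \<Longrightarrow> x \<in> closure K"
    and Df: "(f has_derivative (\<lambda>y. y \<bullet> g)) (at p)" and "g \<noteq> 0"
  shows "n = (n \<bullet> g / (g \<bullet> g)) *\<^sub>R g"
proof (rule ccontr)
  define t where "t = n - (n \<bullet> g / (g \<bullet> g)) *\<^sub>R g"
  assume "n \<noteq> (n \<bullet> g / (g \<bullet> g)) *\<^sub>R g"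
  then have "t \<noteq> 0" by (simp add: t_def)
  have tg: "t \<bullet> g = 0" using \<open>g \<noteq> 0\<close> by (simp add: t_def inner_diff_left)
  have tn: "t \<bullet> n = t \<bullet> t"
    using tg by (simp add: t_def inner_diff_right inner_commute)
  define a where "a = (t \<bullet> t) / (2 * norm g)"
  have "0 < a" using \<open>t \<noteq> 0\<close> \<open>g \<noteq> 0\<close> by (simp add: a_def)
  then obtain h \<tau> where h: "0 < h" "\<bar>\<tau>\<bar> \<le> a * h"
      and z: "p + h *\<^sub>R t + \<tau> *\<^sub>R g \<in> U" "f (p + h *\<^sub>R t + \<tau> *\<^sub>R g) = 0"
    using regular_zero_set_meets_transversal[OF U f Df \<open>g \<noteq> 0\<close> tg] by blast
  have "(p + h *\<^sub>R t + \<tau> *\<^sub>R g) \<bullet> n \<le> p \<bullet> n"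
    using support_normal_closure[OF n zeros[OF z]] .
  moreover have "(p + h *\<^sub>R t + \<tau> *\<^sub>R g) \<bullet> n = p \<bullet> n + h * (t \<bullet> t) + \<tau> * (g \<bullet> n)"
    using tn by (simp add: inner_add_left)
  moreover have "- (\<tau> * (g \<bullet> n)) \<le> a * h * norm g"
    using h(2) Cauchy_Schwarz_ineq2[of g n] n
    by (intro abs_le_D2) (simp add: support_normal_def abs_mult mult_mono)
  moreover have "a * h * norm g = h * (t \<bullet> t) / 2" using \<open>g \<noteq> 0\<close> by (simp add: a_def)
  moreover have "0 < h * (t \<bullet> t)" using h(1) \<open>t \<noteq> 0\<close> by simp
  ultimately show False by linarith
qed

lemma support_normal_continuity:
  fixes K :: "'a::euclidean_space set"
  assumes unique: "\<And>m. support_normal K p m \<Longrightarrow> m = \<nu>" and "0 < \<eta>"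
  obtains r where "0 < r" "\<And>q n. dist q p < r \<Longrightarrow> support_normal K q n \<Longrightarrow> norm (n - \<nu>) < \<eta>"
proof -
  have "\<exists>r>0. \<forall>q n. dist q p < r \<longrightarrow> support_normal K q n \<longrightarrow> norm (n - \<nu>) < \<eta>"
  proof (rule ccontr)
    assume "\<not> ?thesis"
    then have "\<forall>r>0. \<exists>q n. dist q p < r \<and> support_normal K q n \<and> \<eta> \<le> norm (n - \<nu>)"
      by (force simp: not_less)
    then have "\<exists>q n. dist q p < inverse (Suc k) \<and> support_normal K q n \<and> \<eta> \<le> norm (n - \<nu>)" for k :: nat
      by simp
    then obtain Q N where QN: "\<And>k. dist (Q k) p < inverse (Suc k)" "\<And>k. support_normal K (Q k) (N k)"
        "\<And>k. \<eta> \<le> norm (N k - \<nu>)"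
      by metis
    have "\<forall>k. N k \<in> sphere 0 1" using QN(2) by (simp add: support_normal_def)
    then obtain m \<rho> where m: "m \<in> sphere 0 1" "strict_mono \<rho>" "(N \<circ> \<rho>) \<longlonglongrightarrow> m"
      by (rule seq_compactE[OF compact_imp_seq_compact[OF compact_sphere]])
    have "Q \<longlonglongrightarrow> p"
      by (rule tendsto_dist_iff[THEN iffD2], rule Lim_null_comparison[OF always_eventually LIMSEQ_inverse_real_of_nat])
         (use QN(1) in \<open>auto intro: less_imp_le\<close>)
    then have Q\<rho>: "(Q \<circ> \<rho>) \<longlonglongrightarrow> p" using LIMSEQ_subseq_LIMSEQ m(2) by blast
    have "support_normal K p m"
      unfolding support_normal_def
    proof (intro conjI ballI)
      show "norm m = 1" using m(1) by simp
      fix x assume "x \<in> K"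
      have "(\<lambda>k. x \<bullet> (N \<circ> \<rho>) k) \<longlonglongrightarrow> x \<bullet> m" by (intro tendsto_intros m(3))
      moreover have "(\<lambda>k. (Q \<circ> \<rho>) k \<bullet> (N \<circ> \<rho>) k) \<longlonglongrightarrow> p \<bullet> m" by (intro tendsto_intros m(3) Q\<rho>)
      moreover have "\<exists>k0. \<forall>k\<ge>k0. x \<bullet> (N \<circ> \<rho>) k \<le> (Q \<circ> \<rho>) k \<bullet> (N \<circ> \<rho>) k"
        using QN(2) \<open>x \<in> K\<close> by (auto simp: support_normal_def)
      ultimately show "x \<bullet> m \<le> p \<bullet> m" by (rule LIMSEQ_le)
    qed
    then have "m = \<nu>" by (rule unique)
    have "(\<lambda>k. norm ((N \<circ> \<rho>) k - \<nu>)) \<longlonglongrightarrow> norm (m - \<nu>)" by (intro tendsto_intros m(3))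
    then have "\<eta> \<le> norm (m - \<nu>)" by (rule LIMSEQ_le_const) (use QN(3) in auto)
    then show False using \<open>m = \<nu>\<close> \<open>0 < \<eta>\<close> by simp
  qed
  then show ?thesis using that by blast
qed

lemma support_normal_unique:
  fixes K :: "(real^3) set"
  assumes K: "interior K \<noteq> {}" and smooth: "smooth_surface (frontier K)" and p: "p \<in> frontier K"
    and n: "support_normal K p n" and m: "support_normal K p m"
  shows "n = m"
proof -
  obtain U f g where U: "open U" "p \<in> U" and f: "continuous_on U f" "frontier K \<inter> U = {x\<in>U. f x = 0}"
    and g: "g \<noteq> 0" "(f has_derivative (\<lambda>y. y \<bullet> g)) (at p)"
    by (rule smooth_surface_local_gradient[OF smooth p])
  have zeros: "\<And>x. x \<in> U \<Longrightarrow> f x = 0 \<Longrightarrow> x \<in> closure K" and "f p = 0"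
    using f(2) p U(2) by (auto simp: frontier_def)
  define \<alpha> where "\<alpha> = n \<bullet> g / (g \<bullet> g)"
  define \<beta> where "\<beta> = m \<bullet> g / (g \<bullet> g)"
  have n_eq: "n = \<alpha> *\<^sub>R g"
    unfolding \<alpha>_def by (rule support_normal_parallel_gradient[OF n U f(1) \<open>f p = 0\<close> zeros g(2,1)])
  have m_eq: "m = \<beta> *\<^sub>R g"
    unfolding \<beta>_def by (rule support_normal_parallel_gradient[OF m U f(1) \<open>f p = 0\<close> zeros g(2,1)])
  have "\<bar>\<alpha>\<bar> * norm g = \<bar>\<beta>\<bar> * norm g"
    using n m by (simp add: support_normal_def n_eq m_eq)
  then have "\<alpha> = \<beta> \<or> \<alpha> = - \<beta>" using g(1) by (simp add: abs_eq_iff)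
  moreover have "m \<noteq> - n"
  proof
    assume "m = - n"
    obtain x where x: "x \<in> interior K" using K by blast
    then have "p \<bullet> n \<le> x \<bullet> n"
      using m interior_subset \<open>m = - n\<close> by (auto simp: support_normal_def)
    then show False using support_normal_notin_interior[OF n] x by blast
  qed
  ultimately show ?thesis using n_eq m_eq by auto
qed

section \<open>Convex bodies between two balls\<close>

lemma norm_arc_ge:
  fixes a b c :: "'a::real_inner"
  assumes a: "norm a = 1" and b: "norm b = 1" and c: "norm c = 1" "a \<bullet> c = 0" "b \<bullet> c = 0"
    and s: "0 \<le> s" "s \<le> 1"
  shows "3/16 \<le> norm ((1 - s) *\<^sub>R a + s *\<^sub>R b + (s * (1 - s)) *\<^sub>R c)" (is "_ \<le> norm ?q")
proof -
  have "orthogonal ((1 - s) *\<^sub>R a + s *\<^sub>R b) ((s * (1 - s)) *\<^sub>R c)"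
    using c by (simp add: orthogonal_def inner_add_left)
  then have sq: "(norm ?q)^2 = (norm ((1 - s) *\<^sub>R a + s *\<^sub>R b))^2 + (s * (1 - s))^2"
    using c(1) by (simp add: norm_add_Pythagorean)
  have l1: "1 - 2 * s \<le> norm ((1 - s) *\<^sub>R a + s *\<^sub>R b)"
    using norm_diff_ineq[of "(1 - s) *\<^sub>R a" "s *\<^sub>R b"] a b s by simp
  have l2: "2 * s - 1 \<le> norm ((1 - s) *\<^sub>R a + s *\<^sub>R b)"
    using norm_diff_ineq[of "s *\<^sub>R b" "(1 - s) *\<^sub>R a"] a b s by (simp add: add.commute)
  show ?thesis
  proof (cases "s \<le> 1/4 \<or> 3/4 \<le> s")
    case True
    then have "1/2 \<le> norm ((1 - s) *\<^sub>R a + s *\<^sub>R b)" using l1 l2 by auto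
    then have "(1/2)^2 \<le> (norm ((1 - s) *\<^sub>R a + s *\<^sub>R b))^2" by (rule power_mono) simp
    then have "(1/2)^2 \<le> (norm ?q)^2" using sq zero_le_power2[of "s * (1 - s)"] by linarith
    then have "1/2 \<le> norm ?q" by (rule power2_le_imp_le) simp
    then show ?thesis by simp
  next
    case False
    then have "0 \<le> (s - 1/4) * (3/4 - s)" by (intro mult_nonneg_nonneg) auto
    moreover have "(s - 1/4) * (3/4 - s) = s * (1 - s) - 3/16" by (simp add: field_simps)
    ultimately have "3/16 \<le> s * (1 - s)" by linarith
    then have "(3/16)^2 \<le> (s * (1 - s))^2" by (intro power_mono) auto
    then have "(3/16)^2 \<le> (norm ?q)^2"
      using sq zero_le_power2[of "norm ((1 - s) *\<^sub>R a + s *\<^sub>R b)"] by linarith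
    then show ?thesis by (rule power2_le_imp_le) simp
  qed
qed

text \<open>The arc is bent out of the plane of \<open>a\<close> and \<open>b\<close> so that it avoids the origin even
  when \<open>b = -a\<close>.\<close>

lemma unit_vectors_joined_off_origin:
  fixes a b :: "'a::euclidean_space"
  assumes "2 < DIM('a)" and a: "norm a = 1" and b: "norm b = 1"
  obtains q where "q 0 = a" "q 1 = b" "\<And>s. s \<in> {0..1} \<Longrightarrow> 3/16 \<le> norm (q s)"
    "dist_dominated q (\<lambda>s. 3 * s) 0 1"
proof -
  have "dim {a, b} \<le> card {a, b}" by (rule dim_le_card') simp
  also have "\<dots> \<le> 2" by (simp add: card_insert_le_m1)
  finally obtain c0 where c0: "c0 \<noteq> 0" "\<And>z. z \<in> span {a, b} \<Longrightarrow> orthogonal c0 z"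
    using orthogonal_to_subspace_exists assms(1) by (metis le_less_trans)
  define c where "c = (1 / norm c0) *\<^sub>R c0"
  have c: "norm c = 1" "a \<bullet> c = 0" "b \<bullet> c = 0"
    using c0 by (auto simp: c_def orthogonal_def span_base inner_commute)
  define q where "q s = ((1 - s) *\<^sub>R a + s *\<^sub>R b) + (s * (1 - s)) *\<^sub>R c" for s
  have "dist_dominated q (\<lambda>s. 3 * s) 0 1"
  proof (rule dist_dominatedI)
    fix u v :: real assume uv: "0 \<le> u" "u \<le> v" "v \<le> 1"
    have "q v - q u = (v - u) *\<^sub>R (b - a) + ((v - u) * (1 - u - v)) *\<^sub>R c"
      by (simp add: q_def algebra_simps)
    then have "dist (q u) (q v) = norm ((v - u) *\<^sub>R (b - a) + ((v - u) * (1 - u - v)) *\<^sub>R c)"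
      by (metis dist_commute dist_norm)
    also have "\<dots> \<le> (v - u) * norm (b - a) + (v - u) * \<bar>1 - u - v\<bar>"
      using uv c(1) norm_triangle_ineq[of "(v - u) *\<^sub>R (b - a)" "((v - u) * (1 - u - v)) *\<^sub>R c"]
      by (simp add: abs_mult)
    also have "\<dots> \<le> (v - u) * 2 + (v - u) * 1"
      using uv norm_triangle_ineq4[of b a] a b by (intro add_mono mult_left_mono) auto
    finally show "dist (q u) (q v) \<le> 3 * v - 3 * u" by simp
  qed
  moreover have "3/16 \<le> norm (q s)" if "s \<in> {0..1}" for s
    using norm_arc_ge[OF a b c] that by (simp add: q_def)
  ultimately show ?thesis using that[of q] by (simp add: q_def)
qed

text \<open>With \<open>q\<close> the
  arc above, \<open>6 q\<close> stays outside the unit ball because \<open>6 \<cdot> 3/16 > 1\<close>.\<close>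

definition detour :: "'a::real_normed_vector \<Rightarrow> 'a \<Rightarrow> (real \<Rightarrow> 'a) \<Rightarrow> real \<Rightarrow> 'a" where
  "detour x y q t = (if t \<le> 1 then (norm x + t * (6 - norm x)) *\<^sub>R sgn x
     else if t \<le> 2 then 6 *\<^sub>R q (t - 1) else (6 + (t - 2) * (norm y - 6)) *\<^sub>R sgn y)"

lemma detour_dist_dominated:
  assumes x: "norm x \<le> 1" and y: "norm y \<le> 1" and q: "q 0 = sgn x" "q 1 = sgn y"
    and q_dom: "dist_dominated q (\<lambda>s. 3 * s) 0 1"
  shows "dist_dominated (detour x y q) (\<lambda>t. 18 * t) 0 3"
proof (rule dist_dominated_join[of _ _ _ 1])
  have "norm ((6 - norm x) *\<^sub>R sgn x) \<le> 18"
    using x by (simp add: norm_sgn abs_le_iff) (smt (verit) norm_ge_zero mult_left_le)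
  then show "dist_dominated (detour x y q) (\<lambda>t. 18 * t) 0 1"
    by (rule dist_dominated_cong[OF dist_dominated_line, where c=0])
       (auto simp: detour_def scaleR_add_left)
  show "dist_dominated (detour x y q) (\<lambda>t. 18 * t) 1 3"
  proof (rule dist_dominated_join[of _ _ _ 2])
    show "dist_dominated (detour x y q) (\<lambda>t. 18 * t) 1 2"
    proof (rule dist_dominatedI)
      fix u v :: real assume uv: "1 \<le> u" "u \<le> v" "v \<le> 2"
      have "detour x y q t = 6 *\<^sub>R q (t - 1)" if "1 \<le> t" "t \<le> 2" for t
        using that q(1) by (auto simp: detour_def)
      then have "dist (detour x y q u) (detour x y q v) = 6 * dist (q (u - 1)) (q (v - 1))"
        using uv by (simp add: dist_norm flip: scaleR_diff_right)
      also have "\<dots> \<le> 6 * (3 * (v - 1) - 3 * (u - 1))"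
        using uv by (intro mult_left_mono dist_dominatedD[OF q_dom]) auto
      finally show "dist (detour x y q u) (detour x y q v) \<le> 18 * v - 18 * u" by simp
    qed
    have eq: "detour x y q t = (18 - 2 * norm y) *\<^sub>R sgn y + t *\<^sub>R ((norm y - 6) *\<^sub>R sgn y)" if "2 \<le> t" for t
    proof -
      have "detour x y q t = (6 + (t - 2) * (norm y - 6)) *\<^sub>R sgn y"
        using that q(2) by (auto simp: detour_def)
      also have "6 + (t - 2) * (norm y - 6) = (18 - 2 * norm y) + t * (norm y - 6)" by algebra
      finally show ?thesis by (simp add: scaleR_add_left)
    qed
    have "norm ((norm y - 6) *\<^sub>R sgn y) \<le> 18"
      using y by (simp add: norm_sgn abs_le_iff) (smt (verit) norm_ge_zero mult_left_le)
    then show "dist_dominated (detour x y q) (\<lambda>t. 18 * t) 2 3"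
      by (rule dist_dominated_cong[OF dist_dominated_line, where c=0]) (auto simp: eq)
  qed
qed

locale convex_body =
  fixes \<epsilon> :: real and K :: "'a::euclidean_space set"
  assumes eps_pos: "0 < \<epsilon>" and convex: "convex K"
    and ball_subset: "ball 0 \<epsilon> \<subseteq> K" and subset_ball: "K \<subseteq> ball 0 1"
begin

lemma zero_in_interior: "0 \<in> interior K"
  using interior_maximal[OF ball_subset] eps_pos by auto

lemma interior_nonempty: "interior K \<noteq> {}"
  using zero_in_interior by blast

lemma norm_le_1_if_closure: "x \<in> closure K \<Longrightarrow> norm x \<le> 1"
  using closure_mono[OF subset_ball] by auto

lemma notin_interior_if_norm_ge_1: "1 \<le> norm z \<Longrightarrow> z \<notin> interior K"
  using subset_ball interior_subset by fastforce

lemma support_normal_inner_ge: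
  assumes "support_normal K q n"
  shows "\<epsilon> \<le> q \<bullet> n"
proof (rule ccontr)
  assume "\<not> \<epsilon> \<le> q \<bullet> n"
  define r where "r = (max (q \<bullet> n) 0 + \<epsilon>) / 2"
  have r: "0 \<le> r" "r < \<epsilon>" "q \<bullet> n < r" using \<open>\<not> \<epsilon> \<le> q \<bullet> n\<close> eps_pos by (auto simp: r_def)
  have n: "norm n = 1" using assms by (simp add: support_normal_def)
  then have "r *\<^sub>R n \<in> K" using r ball_subset by auto
  moreover have "(r *\<^sub>R n) \<bullet> n = r" using n by (simp add: norm_eq_1)
  ultimately show False using assms r by (auto simp: support_normal_def)
qed

lemma scaleR_frontier_notin_interior:
  assumes "q \<in> frontier K" "1 \<le> \<mu>"
  shows "\<mu> *\<^sub>R q \<notin> interior K"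
proof -
  obtain n where n: "support_normal K q n" using support_normal_exists[OF convex interior_nonempty assms(1)] .
  have "q \<bullet> n \<le> \<mu> * (q \<bullet> n)"
    using support_normal_inner_ge[OF n] eps_pos assms(2) mult_right_mono[of 1 \<mu> "q \<bullet> n"] by simp
  then show ?thesis by (intro support_normal_notin_interior[OF n]) simp
qed

text \<open>The tilt of \<open>w\<close> against the outer normals at \<open>q\<close> is compensated by the radial
  component \<open>M q\<close>, since \<open>q \<bullet> n \<ge> \<epsilon>\<close>.\<close>

lemma push_out_notin_interior:
  assumes "q \<in> frontier K" "0 \<le> M" "0 \<le> t" and w: "norm w = 1" "w \<bullet> \<nu> = 0"
    and normals: "\<And>n. support_normal K q n \<Longrightarrow> norm (n - \<nu>) < M * \<epsilon>"
  shows "q + t *\<^sub>R (w + M *\<^sub>R q) \<notin> interior K"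
proof -
  obtain n where n: "support_normal K q n" using support_normal_exists[OF convex interior_nonempty assms(1)] .
  have "w \<bullet> n = w \<bullet> (n - \<nu>)" using w(2) by (simp add: inner_diff_right)
  then have "- (M * \<epsilon>) \<le> w \<bullet> n"
    using Cauchy_Schwarz_ineq2[of w "n - \<nu>"] w(1) normals[OF n] by (simp add: abs_le_iff)
  moreover have "M * \<epsilon> \<le> M * (q \<bullet> n)" using support_normal_inner_ge[OF n] assms(2) by (rule mult_left_mono)
  ultimately have "0 \<le> t * (w \<bullet> n + M * (q \<bullet> n))" using assms(3) by simp
  then show ?thesis
    by (intro support_normal_notin_interior[OF n]) (simp add: inner_add_left algebra_simps)
qed

lemma detour_notin_interior:
  assumes x: "x \<in> frontier K" and y: "y \<in> frontier K" and q: "\<And>s. s \<in> {0..1} \<Longrightarrow> 3/16 \<le> norm (q s)"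
    and "t \<in> {0..3}"
  shows "detour x y q t \<notin> interior K"
proof -
  have x0: "0 < norm x" and y0: "0 < norm y"
    using x y zero_in_interior by (auto simp: frontier_def)
  have x1: "norm x \<le> 1" and y1: "norm y \<le> 1"
    using x y norm_le_1_if_closure by (auto simp: frontier_def)
  consider "t \<le> 1" | "1 < t" "t \<le> 2" | "2 < t" by linarith
  then show ?thesis
  proof cases
    case 1
    have "1 \<le> (norm x + t * (6 - norm x)) / norm x"
      using x0 x1 assms(4) mult_left_mono[of "norm x" 6 t] by (simp add: field_simps)
    moreover have "detour x y q t = ((norm x + t * (6 - norm x)) / norm x) *\<^sub>R x"
      using 1 by (simp add: detour_def sgn_div_norm divide_inverse)
    ultimately show ?thesis using scaleR_frontier_notin_interior[OF x] by simp
  next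
    case 2
    then have "1 \<le> norm (detour x y q t)" using q[of "t - 1"] by (simp add: detour_def)
    then show ?thesis by (rule notin_interior_if_norm_ge_1)
  next
    case 3
    have "(t - 2) * (6 - norm y) \<le> 1 * (6 - norm y)"
      using assms(4) y1 by (intro mult_right_mono) auto
    then have "1 \<le> (6 + (t - 2) * (norm y - 6)) / norm y"
      using y0 by (simp add: field_simps)
    moreover have "detour x y q t = ((6 + (t - 2) * (norm y - 6)) / norm y) *\<^sub>R y"
      using 3 by (simp add: detour_def sgn_div_norm divide_inverse)
    ultimately show ?thesis using scaleR_frontier_notin_interior[OF y] by simp
  qed
qed

lemma intrinsic_dist_frontier_le_54:
  assumes "2 < DIM('a)" and x: "x \<in> frontier K" and y: "y \<in> frontier K"
  shows "intrinsic_dist (frontier K) x y \<le> 54"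
proof -
  have "x \<noteq> 0" "y \<noteq> 0" "norm x \<le> 1" "norm y \<le> 1"
    using x y zero_in_interior norm_le_1_if_closure by (auto simp: frontier_def)
  then obtain q where q: "q 0 = sgn x" "q 1 = sgn y" "\<And>s. s \<in> {0..1} \<Longrightarrow> 3/16 \<le> norm (q s)"
    "dist_dominated q (\<lambda>s. 3 * s) 0 1"
    using unit_vectors_joined_off_origin[OF assms(1), of "sgn x" "sgn y"] by (auto simp: norm_sgn)
  have "intrinsic_dist (frontier K) (closest_point (closure K) (detour x y q 0))
      (closest_point (closure K) (detour x y q 3)) \<le> ereal (18 * 3 - 18 * 0)"
    using detour_dist_dominated[OF \<open>norm x \<le> 1\<close> \<open>norm y \<le> 1\<close> q(1,2,4)]
      detour_notin_interior[OF x y q(3)]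
    by (intro intrinsic_dist_frontier_le_projection[OF convex interior_nonempty]) auto
  moreover have "detour x y q 0 = x" "detour x y q 3 = y"
    using \<open>x \<noteq> 0\<close> \<open>y \<noteq> 0\<close> by (auto simp: detour_def sgn_div_norm)
  ultimately show ?thesis
    using x y closest_point_self[of _ "closure K"] by (simp add: frontier_def)
qed

end

section \<open>First variation of length\<close>

lemma norm_add_unit_le:
  fixes e v :: "'a::real_inner"
  assumes "norm e = 1"
  shows "norm (e + v) \<le> 1 + e \<bullet> v + (norm v)^2 / 2"
proof (rule power2_le_imp_le)
  have "\<bar>e \<bullet> v\<bar> \<le> norm v" using Cauchy_Schwarz_ineq2[of e v] assms by simp
  moreover have "0 \<le> ((1 - norm v)^2 + 1) / 2" by simp
  moreover have "((1 - norm v)^2 + 1) / 2 = 1 - norm v + (norm v)^2 / 2"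
    by (simp add: power2_eq_square field_simps)
  ultimately show "0 \<le> 1 + e \<bullet> v + (norm v)^2 / 2" by linarith
  have "(norm (e + v))^2 = 1 + 2 * (e \<bullet> v) + (norm v)^2"
    using assms by (simp add: power2_norm_eq_inner inner_add_left inner_add_right inner_commute norm_eq_1)
  also have "\<dots> \<le> 1 + 2 * (e \<bullet> v) + (norm v)^2 + (e \<bullet> v + (norm v)^2 / 2)^2" by simp
  also have "\<dots> = (1 + e \<bullet> v + (norm v)^2 / 2)^2" by (simp add: power2_eq_square field_simps)
  finally show "(norm (e + v))^2 \<le> (1 + e \<bullet> v + (norm v)^2 / 2)^2" .
qed

lemma has_real_derivative_inner:
  assumes "(f has_vector_derivative f') (at x)" "(g has_vector_derivative g') (at x)"
  shows "((\<lambda>x. f x \<bullet> g x) has_real_derivative (f x \<bullet> g' + f' \<bullet> g x)) (at x)"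
  using bounded_bilinear.has_vector_derivative[OF bounded_bilinear_inner assms]
  by (simp add: has_real_derivative_iff_has_vector_derivative)

lemma second_derivative_nonpos_at_max:
  fixes f :: "real \<Rightarrow> real"
  assumes s: "a < s" "s < b"
    and f': "\<And>t. t \<in> {a<..<b} \<Longrightarrow> (f has_real_derivative f' t) (at t)"
    and f'': "(f' has_real_derivative f'') (at s)"
    and max: "\<And>t. t \<in> {a<..<b} \<Longrightarrow> f t \<le> f s"
  shows "f'' \<le> 0"
proof (rule ccontr)
  assume "\<not> f'' \<le> 0"
  have "f' s = 0"
    by (rule DERIV_local_max[OF f'[of s], where d="min (s - a) (b - s)"])
       (use s max in \<open>auto simp: abs_less_iff\<close>)
  obtain d where d: "d > 0" "\<And>h. 0 < h \<Longrightarrow> h < d \<Longrightarrow> f' s < f' (s + h)"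
    using DERIV_pos_inc_right[OF f''] \<open>\<not> f'' \<le> 0\<close> by force
  define h where "h = min (d / 2) ((b - s) / 2)"
  have h: "0 < h" "h < d" "s + h < b" using d(1) s by (auto simp: h_def min_def field_simps)
  obtain z where z: "s < z" "z < s + h" "f (s + h) - f s = h * f' z"
    using MVT2[of s "s + h" f f'] f' s h by force
  have "0 < f' z" using d(2)[of "z - s"] z h \<open>f' s = 0\<close> by simp
  then have "f s < f (s + h)" using z h by (simp add: algebra_simps)
  moreover have "f (s + h) \<le> f s" using max h s by simp
  ultimately show False by simp
qed

text \<open>Write \<open>\<phi>\<close> for the bump and \<open>b = (\<phi> u)'\<close>. The perturbed
  curve has speed \<open>|\<gamma>' + \<delta> b| \<le> 1 + \<delta> (\<gamma>' \<bullet> b) + \<delta>\<^sup>2 B\<^sup>2 / 2\<close>, and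
  \<open>\<gamma>' \<bullet> b = (\<phi> (\<gamma>' \<bullet> u))' - \<phi> (\<gamma>'' \<bullet> u) \<le> (\<phi> (\<gamma>' \<bullet> u))' - \<kappa> \<phi>\<close>; the majorant is the
  antiderivative of this bound (\<open>\<Psi>' = \<phi>\<close>).\<close>

lemma bump_variation_dist_dominated:
  fixes \<gamma> \<gamma>' \<gamma>'' u u' :: "real \<Rightarrow> 'a::real_inner" and h s0 :: real
  defines "\<phi> \<equiv> \<lambda>s. h\<^sup>2 - (s - s0)\<^sup>2" and "\<Psi> \<equiv> \<lambda>s. h\<^sup>2 * (s - s0) - (s - s0)^3 / 3"
  assumes "0 \<le> \<delta>"
    and cont: "continuous_on {s0 - h..s0 + h} \<gamma>" "continuous_on {s0 - h..s0 + h} \<gamma>'"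
      "continuous_on {s0 - h..s0 + h} u"
    and \<gamma>: "\<And>s. s \<in> {s0 - h<..<s0 + h} \<Longrightarrow> (\<gamma> has_vector_derivative \<gamma>' s) (at s)"
    and \<gamma>': "\<And>s. s \<in> {s0 - h<..<s0 + h} \<Longrightarrow> (\<gamma>' has_vector_derivative \<gamma>'' s) (at s)"
    and u: "\<And>s. s \<in> {s0 - h<..<s0 + h} \<Longrightarrow> (u has_vector_derivative u' s) (at s)"
    and unit: "\<And>s. s \<in> {s0 - h<..<s0 + h} \<Longrightarrow> norm (\<gamma>' s) = 1"
    and curv: "\<And>s. s \<in> {s0 - h<..<s0 + h} \<Longrightarrow> \<kappa> \<le> \<gamma>'' s \<bullet> u s"
    and bound: "\<And>s. s \<in> {s0 - h<..<s0 + h} \<Longrightarrow> norm ((- 2 * (s - s0)) *\<^sub>R u s + \<phi> s *\<^sub>R u' s) \<le> B"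
  shows "dist_dominated (\<lambda>s. \<gamma> s + (\<delta> * \<phi> s) *\<^sub>R u s)
           (\<lambda>s. s + \<delta> * (\<phi> s * (\<gamma>' s \<bullet> u s)) - \<delta> * \<kappa> * \<Psi> s + \<delta>\<^sup>2 * B\<^sup>2 * s / 2) (s0 - h) (s0 + h)"
proof -
  define b where "b s = (- 2 * (s - s0)) *\<^sub>R u s + \<phi> s *\<^sub>R u' s" for s
  have \<phi>_deriv: "(\<phi> has_real_derivative - 2 * (s - s0)) (at s)" for s
    unfolding \<phi>_def by (auto intro!: derivative_eq_intros)
  have \<Psi>_deriv: "(\<Psi> has_real_derivative \<phi> s) (at s)" for s
    unfolding \<Psi>_def \<phi>_def by (auto intro!: derivative_eq_intros simp: power2_eq_square)
  show ?thesis
  proof (rule dist_dominated_if_derivative_bound)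
    show "continuous_on {s0 - h..s0 + h} (\<lambda>s. \<gamma> s + (\<delta> * \<phi> s) *\<^sub>R u s)"
      "continuous_on {s0 - h..s0 + h} (\<lambda>s. s + \<delta> * (\<phi> s * (\<gamma>' s \<bullet> u s)) - \<delta> * \<kappa> * \<Psi> s + \<delta>\<^sup>2 * B\<^sup>2 * s / 2)"
      by (auto simp: \<phi>_def \<Psi>_def intro!: continuous_intros cont)
    fix s assume s: "s \<in> {s0 - h<..<s0 + h}"
    have "((\<lambda>s. \<gamma> s + (\<delta> * \<phi> s) *\<^sub>R u s) has_vector_derivative
        \<gamma>' s + ((\<delta> * \<phi> s) *\<^sub>R u' s + (\<delta> * (- 2 * (s - s0))) *\<^sub>R u s)) (at s)"
      by (rule derivative_eq_intros \<gamma>[OF s] u[OF s] \<phi>_deriv refl | simp)+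
    then show "((\<lambda>s. \<gamma> s + (\<delta> * \<phi> s) *\<^sub>R u s) has_vector_derivative \<gamma>' s + \<delta> *\<^sub>R b s) (at s)"
      by (simp add: b_def algebra_simps)
    have inner: "((\<lambda>s. \<gamma>' s \<bullet> u s) has_real_derivative (\<gamma>' s \<bullet> u' s + \<gamma>'' s \<bullet> u s)) (at s)"
      by (rule has_real_derivative_inner[OF \<gamma>'[OF s] u[OF s]])
    have "((\<lambda>s. s + \<delta> * (\<phi> s * (\<gamma>' s \<bullet> u s)) - \<delta> * \<kappa> * \<Psi> s + \<delta>\<^sup>2 * B\<^sup>2 * s / 2) has_real_derivative
        1 + \<delta> * (- 2 * (s - s0) * (\<gamma>' s \<bullet> u s) + \<phi> s * (\<gamma>' s \<bullet> u' s + \<gamma>'' s \<bullet> u s))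
        - \<delta> * \<kappa> * \<phi> s + \<delta>\<^sup>2 * B\<^sup>2 / 2) (at s)"
      by (rule derivative_eq_intros inner \<phi>_deriv \<Psi>_deriv refl | simp)+ (simp add: algebra_simps)
    then show "((\<lambda>s. s + \<delta> * (\<phi> s * (\<gamma>' s \<bullet> u s)) - \<delta> * \<kappa> * \<Psi> s + \<delta>\<^sup>2 * B\<^sup>2 * s / 2) has_real_derivative
        1 + \<delta> * (\<gamma>' s \<bullet> b s) + \<delta> * \<phi> s * (\<gamma>'' s \<bullet> u s) - \<delta> * \<kappa> * \<phi> s + \<delta>\<^sup>2 * B\<^sup>2 / 2) (at s)"
      by (simp add: b_def inner_add_right algebra_simps)
    have "0 \<le> \<phi> s" using s power_mono[of "\<bar>s - s0\<bar>" h 2] by (auto simp: \<phi>_def)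
    have "norm (\<gamma>' s + \<delta> *\<^sub>R b s) \<le> 1 + \<delta> * (\<gamma>' s \<bullet> b s) + \<delta>\<^sup>2 * (norm (b s))\<^sup>2 / 2"
      using norm_add_unit_le[OF unit[OF s], of "\<delta> *\<^sub>R b s"] \<open>0 \<le> \<delta>\<close> by (simp add: power_mult_distrib)
    also have "\<dots> \<le> 1 + \<delta> * (\<gamma>' s \<bullet> b s) + \<delta>\<^sup>2 * B\<^sup>2 / 2"
      using bound[OF s] by (simp add: b_def mult_left_mono power_mono)
    also have "\<dots> \<le> 1 + \<delta> * (\<gamma>' s \<bullet> b s) + \<delta> * \<phi> s * (\<gamma>'' s \<bullet> u s) - \<delta> * \<kappa> * \<phi> s + \<delta>\<^sup>2 * B\<^sup>2 / 2"
      using mult_left_mono[OF mult_right_mono[OF curv[OF s] \<open>0 \<le> \<phi> s\<close>] \<open>0 \<le> \<delta>\<close>]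
      by (simp add: algebra_simps)
    finally show "norm (\<gamma>' s + \<delta> *\<^sub>R b s)
        \<le> 1 + \<delta> * (\<gamma>' s \<bullet> b s) + \<delta> * \<phi> s * (\<gamma>'' s \<bullet> u s) - \<delta> * \<kappa> * \<phi> s + \<delta>\<^sup>2 * B\<^sup>2 / 2" .
  qed
qed

lemma bump_variation_shortens:
  fixes \<gamma> \<gamma>' \<gamma>'' u u' :: "real \<Rightarrow> 'a::real_inner"
  assumes "0 < h" "0 < \<kappa>"
    and cont: "continuous_on {s0 - h..s0 + h} \<gamma>" "continuous_on {s0 - h..s0 + h} \<gamma>'"
      "continuous_on {s0 - h..s0 + h} u"
    and \<gamma>: "\<And>s. s \<in> {s0 - h<..<s0 + h} \<Longrightarrow> (\<gamma> has_vector_derivative \<gamma>' s) (at s)"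
    and \<gamma>': "\<And>s. s \<in> {s0 - h<..<s0 + h} \<Longrightarrow> (\<gamma>' has_vector_derivative \<gamma>'' s) (at s)"
    and u: "\<And>s. s \<in> {s0 - h<..<s0 + h} \<Longrightarrow> (u has_vector_derivative u' s) (at s)"
    and unit: "\<And>s. s \<in> {s0 - h<..<s0 + h} \<Longrightarrow> norm (\<gamma>' s) = 1"
    and curv: "\<And>s. s \<in> {s0 - h<..<s0 + h} \<Longrightarrow> \<kappa> \<le> \<gamma>'' s \<bullet> u s"
    and bound: "\<And>s. s \<in> {s0 - h<..<s0 + h} \<Longrightarrow> norm (u s) \<le> U"
      "\<And>s. s \<in> {s0 - h<..<s0 + h} \<Longrightarrow> norm (u' s) \<le> U'"
  obtains \<delta> F where "0 < \<delta>" "continuous_on {s0 - h..s0 + h} F"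
    "dist_dominated (\<lambda>s. \<gamma> s + (\<delta> * (h\<^sup>2 - (s - s0)\<^sup>2)) *\<^sub>R u s) F (s0 - h) (s0 + h)"
    "F (s0 + h) - F (s0 - h) < 2 * h"
proof -
  define B where "B = 2 * h * U + h\<^sup>2 * U'"
  define \<delta> where "\<delta> = \<kappa> * h\<^sup>2 / (B\<^sup>2 + 1)"
  define F where "F s = s + \<delta> * ((h\<^sup>2 - (s - s0)\<^sup>2) * (\<gamma>' s \<bullet> u s))
    - \<delta> * \<kappa> * (h\<^sup>2 * (s - s0) - (s - s0)^3 / 3) + \<delta>\<^sup>2 * B\<^sup>2 * s / 2" for s
  have "0 < B\<^sup>2 + 1" by (simp add: add_nonneg_pos)
  then have \<delta>: "0 < \<delta>" using assms(1,2) by (simp add: \<delta>_def)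
  have "norm ((- 2 * (s - s0)) *\<^sub>R u s + (h\<^sup>2 - (s - s0)\<^sup>2) *\<^sub>R u' s) \<le> B"
    if s: "s \<in> {s0 - h<..<s0 + h}" for s
  proof -
    have "\<bar>s - s0\<bar> \<le> h" using s by auto
    then have "0 \<le> h\<^sup>2 - (s - s0)\<^sup>2" "\<bar>- 2 * (s - s0)\<bar> \<le> 2 * h"
      using power_mono[of "\<bar>s - s0\<bar>" h 2] by auto
    then have "\<bar>- 2 * (s - s0)\<bar> * norm (u s) + (h\<^sup>2 - (s - s0)\<^sup>2) * norm (u' s) \<le> 2 * h * U + h\<^sup>2 * U'"
      using bound[OF s] assms(1) by (intro add_mono mult_mono) auto
    then show ?thesis
      using norm_triangle_ineq[of "(- 2 * (s - s0)) *\<^sub>R u s" "(h\<^sup>2 - (s - s0)\<^sup>2) *\<^sub>R u' s"]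
        \<open>0 \<le> h\<^sup>2 - (s - s0)\<^sup>2\<close> by (simp add: B_def)
  qed
  then have "dist_dominated (\<lambda>s. \<gamma> s + (\<delta> * (h\<^sup>2 - (s - s0)\<^sup>2)) *\<^sub>R u s) F (s0 - h) (s0 + h)"
    unfolding F_def using \<delta> by (intro bump_variation_dist_dominated[OF _ cont \<gamma> \<gamma>' u unit curv]) auto
  moreover have "continuous_on {s0 - h..s0 + h} F"
    by (auto simp: F_def intro!: continuous_intros cont)
  moreover have "F (s0 + h) - F (s0 - h) < 2 * h"
  proof -
    have "F (s0 + h) - F (s0 - h) = 2 * h - \<delta> * \<kappa> * (4 * h^3 / 3) + \<delta>\<^sup>2 * B\<^sup>2 * h"
      by (simp add: F_def power3_eq_cube power2_eq_square field_simps)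
    moreover have "\<delta> * B\<^sup>2 < \<kappa> * h\<^sup>2 * (4 / 3)"
    proof -
      have "\<delta> * B\<^sup>2 \<le> \<delta> * (B\<^sup>2 + 1)" using \<delta> by simp
      also have "\<dots> = \<kappa> * h\<^sup>2" using \<open>0 < B\<^sup>2 + 1\<close> by (simp add: \<delta>_def)
      also have "\<dots> < \<kappa> * h\<^sup>2 * (4 / 3)" using assms(1,2) by simp
      finally show ?thesis .
    qed
    then have "\<delta>\<^sup>2 * B\<^sup>2 * h < \<delta> * \<kappa> * (4 * h^3 / 3)"
      using \<delta> assms(1) mult_strict_left_mono[of "\<delta> * B\<^sup>2" "\<kappa> * h\<^sup>2 * (4 / 3)" "\<delta> * h"]
      by (simp add: power2_eq_square power3_eq_cube algebra_simps)
    ultimately show ?thesis by linarith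
  qed
  ultimately show ?thesis using that[OF \<delta>] by blast
qed

lemma inner_tilted_ge:
  fixes v v0 w x :: "'a::real_inner"
  assumes w: "norm w = 1" and close: "norm (v - v0) < v0 \<bullet> w / 2"
    and "norm v \<le> B" "norm x \<le> 1" "0 \<le> M" "M * B = v0 \<bullet> w / 4"
  shows "v0 \<bullet> w / 4 \<le> v \<bullet> (w + M *\<^sub>R x)"
proof -
  have "\<bar>(v - v0) \<bullet> w\<bar> < v0 \<bullet> w / 2" using Cauchy_Schwarz_ineq2[of "v - v0" w] w close by simp
  then have "v0 \<bullet> w / 2 < v \<bullet> w" unfolding abs_less_iff by (simp add: inner_diff_left)
  moreover have "\<bar>v \<bullet> x\<bar> \<le> B"
    using Cauchy_Schwarz_ineq2[of v x] assms(3,4) mult_mono[of "norm v" B "norm x" 1]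
      order_trans[OF norm_ge_zero assms(3)] by auto
  then have "- (v0 \<bullet> w / 4) \<le> M * (v \<bullet> x)"
    using assms(5,6) mult_left_mono[of "- (v \<bullet> x)" B M] by (simp add: abs_le_iff)
  ultimately show ?thesis by (simp add: inner_add_right)
qed

lemma continuous_on_interior_nbhd:
  fixes f :: "real \<Rightarrow> 'a::metric_space"
  assumes "continuous_on {a..b} f" "a < t" "t < b" "0 < e"
  obtains h where "0 < h" "a < t - h" "t + h < b" "\<And>s. s \<in> {t - h..t + h} \<Longrightarrow> dist (f s) (f t) < e"
proof -
  obtain d where d: "0 < d" "\<And>s. s \<in> {a..b} \<Longrightarrow> dist s t < d \<Longrightarrow> dist (f s) (f t) < e"
    using assms unfolding continuous_on_iff by (metis atLeastAtMost_iff less_imp_le)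
  define m where "m = min d (min (t - a) (b - t))"
  define h where "h = m / 2"
  have "0 < m" "m \<le> d" "m \<le> t - a" "m \<le> b - t" using d(1) assms(2,3) by (auto simp: m_def)
  then have h: "0 < h" "h < d" "h < t - a" "h < b - t" by (simp_all add: h_def)
  have "dist (f s) (f t) < e" if "s \<in> {t - h..t + h}" for s
    using that h by (intro d(2)) (auto simp: dist_real_def)
  moreover have "a < t - h" "t + h < b" using h by linarith+
  ultimately show ?thesis using that h(1) by blast
qed

section \<open>Shortest paths on the boundary\<close>

locale shortest_path = convex_body \<epsilon> K
  for \<epsilon> :: real and K :: "(real^3) set" +
  fixes \<gamma> \<gamma>' \<gamma>'' :: "real \<Rightarrow> real^3" and L :: real
  assumes smooth: "smooth_surface (frontier K)"
    and length_nonneg: "0 \<le> L"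
    and on_frontier: "\<gamma> ` {0..L} \<subseteq> frontier K"
    and \<gamma>_deriv: "\<And>s. s \<in> {0..L} \<Longrightarrow> (\<gamma> has_vector_derivative \<gamma>' s) (at s within {0..L})"
    and \<gamma>'_deriv: "\<And>s. s \<in> {0..L} \<Longrightarrow> (\<gamma>' has_vector_derivative \<gamma>'' s) (at s within {0..L})"
    and unit_speed: "\<And>s. s \<in> {0..L} \<Longrightarrow> norm (\<gamma>' s) = 1"
    and \<gamma>''_cont: "continuous_on {0..L} \<gamma>''"
    and shortest: "curve_length \<gamma> 0 L = intrinsic_dist (frontier K) (\<gamma> 0) (\<gamma> L)"
begin

lemma \<gamma>_cont: "continuous_on {0..L} \<gamma>"
  using \<gamma>_deriv has_vector_derivative_continuous continuous_on_eq_continuous_within by blast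

lemma \<gamma>'_cont: "continuous_on {0..L} \<gamma>'"
  using \<gamma>'_deriv has_vector_derivative_continuous continuous_on_eq_continuous_within by blast

lemma \<gamma>_deriv_at: "s \<in> {0<..<L} \<Longrightarrow> (\<gamma> has_vector_derivative \<gamma>' s) (at s)"
  using \<gamma>_deriv[of s] by (simp add: at_within_Icc_at)

lemma \<gamma>'_deriv_at: "s \<in> {0<..<L} \<Longrightarrow> (\<gamma>' has_vector_derivative \<gamma>'' s) (at s)"
  using \<gamma>'_deriv[of s] by (simp add: at_within_Icc_at)

lemma \<gamma>_in_frontier: "s \<in> {0..L} \<Longrightarrow> \<gamma> s \<in> frontier K"
  using on_frontier by blast

lemma \<gamma>_in_closure: "s \<in> {0..L} \<Longrightarrow> \<gamma> s \<in> closure K"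
  using \<gamma>_in_frontier by (simp add: frontier_def)

lemma \<gamma>_notin_interior: "s \<in> {0..L} \<Longrightarrow> \<gamma> s \<notin> interior K"
  using \<gamma>_in_frontier by (simp add: frontier_def)

lemma norm_\<gamma>_le_1: "s \<in> {0..L} \<Longrightarrow> norm (\<gamma> s) \<le> 1"
  using \<gamma>_in_closure norm_le_1_if_closure by blast

lemma length_le_intrinsic_dist: "ereal L \<le> intrinsic_dist (frontier K) (\<gamma> 0) (\<gamma> L)"
  using curve_length_unit_speed_ge[OF length_nonneg \<gamma>_deriv unit_speed \<gamma>'_cont] shortest by simp

lemma length_le_54: "L \<le> 54"
proof -
  have "ereal L \<le> intrinsic_dist (frontier K) (\<gamma> 0) (\<gamma> L)" by (rule length_le_intrinsic_dist)
  also have "\<dots> \<le> 54"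
    using length_nonneg by (intro intrinsic_dist_frontier_le_54 \<gamma>_in_frontier) auto
  finally show ?thesis by simp
qed

text \<open>Otherwise projecting the competitor \<open>c\<close> to the boundary and splicing it into \<open>\<gamma>\<close> would
  shorten \<open>\<gamma>\<close>.\<close>

lemma competitor_length_ge:
  assumes s12: "0 \<le> s1" "s1 \<le> s2" "s2 \<le> L"
    and c: "dist_dominated c F s1 s2" and F: "continuous_on {s1..s2} F"
    and ends: "c s1 = \<gamma> s1" "c s2 = \<gamma> s2"
    and out: "\<And>s. s \<in> {s1..s2} \<Longrightarrow> c s \<notin> interior K"
  shows "s2 - s1 \<le> F s2 - F s1"
proof -
  define p where "p s = (if s \<in> {s1..s2} then c s else \<gamma> s)" for s
  define H where "H s = s + (F (max s1 (min s s2)) - max s1 (min s s2)) - (F s1 - s1)" for s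
  have "dist_dominated \<gamma> (\<lambda>s. s) 0 L"
    using \<gamma>_cont unit_speed \<gamma>_deriv_at
    by (intro dist_dominated_if_derivative_bound[where F'="\<lambda>_. 1"]) (auto intro!: derivative_eq_intros)
  then have "dist_dominated p H 0 L"
    unfolding p_def H_def using dist_dominated_splice[OF s12 _ c ends] by blast
  moreover have "continuous_on {0..L} H"
    unfolding H_def
    by (intro continuous_intros continuous_on_compose2[OF F]) (use s12 in auto)
  moreover have "p s \<notin> interior K" if "s \<in> {0..L}" for s
    using that out \<gamma>_notin_interior by (auto simp: p_def)
  ultimately have "intrinsic_dist (frontier K) (closest_point (closure K) (p 0)) (closest_point (closure K) (p L))
      \<le> ereal (H L - H 0)"
    using length_nonneg by (intro intrinsic_dist_frontier_le_projection[OF convex interior_nonempty])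
  moreover have "p 0 = \<gamma> 0" "p L = \<gamma> L" using s12 ends by (auto simp: p_def)
  moreover have "closest_point (closure K) (\<gamma> s) = \<gamma> s" if "s \<in> {0..L}" for s
    using that by (intro closest_point_self \<gamma>_in_closure)
  ultimately have "intrinsic_dist (frontier K) (\<gamma> 0) (\<gamma> L) \<le> ereal (H L - H 0)"
    using length_nonneg by simp
  then have "ereal L \<le> ereal (H L - H 0)" using length_le_intrinsic_dist by (rule order_trans[rotated])
  then show ?thesis using s12 by (simp add: H_def)
qed

lemma second_derivative_normal_nonpos:
  assumes s: "s \<in> {0<..<L}" and \<nu>: "support_normal K (\<gamma> s) \<nu>"
  shows "\<gamma>'' s \<bullet> \<nu> \<le> 0"
proof (rule second_derivative_nonpos_at_max[where f="\<lambda>t. \<gamma> t \<bullet> \<nu>" and f'="\<lambda>t. \<gamma>' t \<bullet> \<nu>"])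
  show "0 < s" "s < L" using s by auto
  show "((\<lambda>t. \<gamma> t \<bullet> \<nu>) has_real_derivative \<gamma>' t \<bullet> \<nu>) (at t)" if "t \<in> {0<..<L}" for t
    using has_real_derivative_inner[OF \<gamma>_deriv_at[OF that] has_vector_derivative_const] by simp
  show "((\<lambda>t. \<gamma>' t \<bullet> \<nu>) has_real_derivative \<gamma>'' s \<bullet> \<nu>) (at s)"
    using has_real_derivative_inner[OF \<gamma>'_deriv_at[OF s] has_vector_derivative_const] by simp
  show "\<gamma> t \<bullet> \<nu> \<le> \<gamma> s \<bullet> \<nu>" if "t \<in> {0<..<L}" for t
    using that by (intro support_normal_closure[OF \<nu>] \<gamma>_in_closure) auto
qed

lemma tilted_bump_variation_shortens:
  assumes h: "0 < h" "0 < s0 - h" "s0 + h < L" and "0 < M" "norm w = 1" "0 < \<kappa>"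
    and curv: "\<And>s. s \<in> {s0 - h<..<s0 + h} \<Longrightarrow> \<kappa> \<le> \<gamma>'' s \<bullet> (w + M *\<^sub>R \<gamma> s)"
  obtains \<delta> F where "0 < \<delta>" "continuous_on {s0 - h..s0 + h} F"
    "dist_dominated (\<lambda>s. \<gamma> s + (\<delta> * (h\<^sup>2 - (s - s0)\<^sup>2)) *\<^sub>R (w + M *\<^sub>R \<gamma> s)) F (s0 - h) (s0 + h)"
    "F (s0 + h) - F (s0 - h) < 2 * h"
proof (rule bump_variation_shortens[where \<kappa>=\<kappa> and u'="\<lambda>s. M *\<^sub>R \<gamma>' s" and U="1 + M" and U'=M])
  have sub: "{s0 - h..s0 + h} \<subseteq> {0..L}" using h by auto
  then show "continuous_on {s0 - h..s0 + h} \<gamma>" "continuous_on {s0 - h..s0 + h} \<gamma>'"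
    "continuous_on {s0 - h..s0 + h} (\<lambda>s. w + M *\<^sub>R \<gamma> s)"
    by (auto intro!: continuous_intros continuous_on_subset[OF \<gamma>_cont] continuous_on_subset[OF \<gamma>'_cont])
  fix s assume "s \<in> {s0 - h<..<s0 + h}"
  then have s: "s \<in> {0<..<L}" "s \<in> {0..L}" using h by auto
  show "(\<gamma> has_vector_derivative \<gamma>' s) (at s)" "(\<gamma>' has_vector_derivative \<gamma>'' s) (at s)"
    using \<gamma>_deriv_at \<gamma>'_deriv_at s by auto
  show "((\<lambda>s. w + M *\<^sub>R \<gamma> s) has_vector_derivative M *\<^sub>R \<gamma>' s) (at s)"
    using \<gamma>_deriv_at[OF s(1)] by (auto intro!: derivative_eq_intros)
  show "norm (\<gamma>' s) = 1" "norm (M *\<^sub>R \<gamma>' s) \<le> M" using unit_speed s \<open>0 < M\<close> by auto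
  have "norm (w + M *\<^sub>R \<gamma> s) \<le> norm w + norm (M *\<^sub>R \<gamma> s)" by (rule norm_triangle_ineq)
  also have "\<dots> \<le> 1 + M" using \<open>norm w = 1\<close> \<open>0 < M\<close> norm_\<gamma>_le_1[OF s(2)] by (simp add: mult_left_le)
  finally show "norm (w + M *\<^sub>R \<gamma> s) \<le> 1 + M" .
qed (use assms in auto)

lemma second_derivative_tangential_nonpos:
  assumes s0: "s0 \<in> {0<..<L}" and \<nu>: "support_normal K (\<gamma> s0) \<nu>" and w: "norm w = 1" "w \<bullet> \<nu> = 0"
  shows "\<gamma>'' s0 \<bullet> w \<le> 0"
proof (rule ccontr)
  define a where "a = \<gamma>'' s0 \<bullet> w"
  assume "\<not> \<gamma>'' s0 \<bullet> w \<le> 0"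
  then have a: "0 < a" by (simp add: a_def)
  obtain B where B: "0 < B" "\<And>s. s \<in> {0..L} \<Longrightarrow> norm (\<gamma>'' s) \<le> B"
    using compact_imp_bounded[OF compact_continuous_image[OF \<gamma>''_cont compact_Icc]]
    by (auto simp: bounded_pos)
  define M where "M = a / (4 * B)"
  have M: "0 < M" "M * B = a / 4" using a B by (auto simp: M_def)
  have "m = \<nu>" if "support_normal K (\<gamma> s0) m" for m
    using s0 by (intro support_normal_unique[OF interior_nonempty smooth _ that \<nu>] \<gamma>_in_frontier) auto
  then obtain r where r: "0 < r" "\<And>q n. dist q (\<gamma> s0) < r \<Longrightarrow> support_normal K q n \<Longrightarrow> norm (n - \<nu>) < M * \<epsilon>"
    using support_normal_continuity M(1) eps_pos by (metis mult_pos_pos)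
  obtain h0 where h0: "0 < h0" "0 < s0 - h0" "s0 + h0 < L"
    "\<And>s. s \<in> {s0 - h0..s0 + h0} \<Longrightarrow> dist (\<gamma> s) (\<gamma> s0) < r"
    by (rule continuous_on_interior_nbhd[OF \<gamma>_cont _ _ r(1)]) (use s0 in auto)
  obtain h1 where h1: "0 < h1" "0 < s0 - h1" "s0 + h1 < L"
    "\<And>s. s \<in> {s0 - h1..s0 + h1} \<Longrightarrow> dist (\<gamma>'' s) (\<gamma>'' s0) < a / 2"
    by (rule continuous_on_interior_nbhd[OF \<gamma>''_cont, where t=s0 and e="a / 2"]) (use s0 a in auto)
  define h where "h = min h0 h1"
  have h: "0 < h" "0 < s0 - h" "s0 + h < L" and "h \<le> h0" "h \<le> h1"
    using h0(1-3) h1(1-3) by (auto simp: h_def)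
  then have I: "s \<in> {s0 - h0..s0 + h0}" "s \<in> {s0 - h1..s0 + h1}" "s \<in> {0..L}"
    if "s \<in> {s0 - h..s0 + h}" for s
    using that by auto
  have curv: "a / 4 \<le> \<gamma>'' s \<bullet> (w + M *\<^sub>R \<gamma> s)" if "s \<in> {s0 - h<..<s0 + h}" for s
  proof -
    have "s \<in> {s0 - h..s0 + h}" using that by simp
    then have s: "s \<in> {s0 - h1..s0 + h1}" "s \<in> {0..L}" by (rule I(2), rule I(3))
    show ?thesis
      unfolding a_def using h1(4)[OF s(1)] B(2)[OF s(2)] norm_\<gamma>_le_1[OF s(2)] M
      by (intro inner_tilted_ge[OF w(1)]) (auto simp: dist_norm a_def)
  qed
  obtain \<delta> F where \<delta>: "0 < \<delta>" and F: "continuous_on {s0 - h..s0 + h} F"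
    and dom: "dist_dominated (\<lambda>s. \<gamma> s + (\<delta> * (h\<^sup>2 - (s - s0)\<^sup>2)) *\<^sub>R (w + M *\<^sub>R \<gamma> s)) F (s0 - h) (s0 + h)"
    and shorter: "F (s0 + h) - F (s0 - h) < 2 * h"
    by (rule tilted_bump_variation_shortens[OF h M(1) w(1) _ curv]) (use a in simp)
  have "(s0 + h) - (s0 - h) \<le> F (s0 + h) - F (s0 - h)"
  proof (rule competitor_length_ge[OF _ _ _ dom F])
    fix s assume s: "s \<in> {s0 - h..s0 + h}"
    have "0 \<le> \<delta> * (h\<^sup>2 - (s - s0)\<^sup>2)"
      using s \<delta> power_mono[of "\<bar>s - s0\<bar>" h 2] by (auto simp: abs_le_iff)
    moreover have "norm (n - \<nu>) < M * \<epsilon>" if "support_normal K (\<gamma> s) n" for n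
      using r(2)[OF h0(4)[OF I(1)[OF s]] that] .
    ultimately show "\<gamma> s + (\<delta> * (h\<^sup>2 - (s - s0)\<^sup>2)) *\<^sub>R (w + M *\<^sub>R \<gamma> s) \<notin> interior K"
      using M(1) by (intro push_out_notin_interior[OF \<gamma>_in_frontier[OF I(3)[OF s]] _ _ w]) auto
  qed (use h in auto)
  then show False using shorter by simp
qed

lemma curvature_le_radial:
  assumes s: "s \<in> {0<..<L}"
  shows "\<epsilon> * norm (\<gamma>'' s) \<le> - (\<gamma>'' s \<bullet> \<gamma> s)"
proof -
  have "\<gamma> s \<in> frontier K" using s by (intro \<gamma>_in_frontier) auto
  then obtain \<nu> where \<nu>: "support_normal K (\<gamma> s) \<nu>"
    by (rule support_normal_exists[OF convex interior_nonempty])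
  have \<nu>\<nu>: "\<nu> \<bullet> \<nu> = 1" using \<nu> by (simp add: support_normal_def norm_eq_1)
  define k where "k = \<gamma>'' s \<bullet> \<nu>"
  define T where "T = \<gamma>'' s - k *\<^sub>R \<nu>"
  have T\<nu>: "T \<bullet> \<nu> = 0" using \<nu>\<nu> by (simp add: T_def k_def inner_diff_left)
  have "T = 0"
  proof (rule ccontr)
    assume "T \<noteq> 0"
    have "\<gamma>'' s \<bullet> ((1 / norm T) *\<^sub>R T) \<le> 0"
      using \<open>T \<noteq> 0\<close> T\<nu> by (intro second_derivative_tangential_nonpos[OF s \<nu>]) auto
    moreover have "\<gamma>'' s \<bullet> T = T \<bullet> T"
      using T\<nu> by (simp add: T_def inner_diff_left inner_commute)
    moreover have "0 < T \<bullet> T" using \<open>T \<noteq> 0\<close> by simp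
    ultimately show False using \<open>T \<noteq> 0\<close> by (simp add: divide_le_0_iff)
  qed
  then have \<gamma>'': "\<gamma>'' s = k *\<^sub>R \<nu>" by (simp add: T_def)
  have "k \<le> 0" unfolding k_def by (rule second_derivative_normal_nonpos[OF s \<nu>])
  then have "k * (\<gamma> s \<bullet> \<nu>) \<le> k * \<epsilon>" by (rule mult_left_mono_neg[OF support_normal_inner_ge[OF \<nu>]])
  moreover have "norm (\<gamma>'' s) = - k" using \<gamma>'' \<open>k \<le> 0\<close> \<nu> by (simp add: support_normal_def)
  ultimately show ?thesis using \<gamma>'' by (simp add: inner_commute algebra_simps)
qed

lemma total_curvature_le: "\<epsilon> * integral {0..L} (\<lambda>s. norm (\<gamma>'' s)) \<le> L + 2"
proof (cases "L = 0")
  case False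
  then have L: "0 < L" using length_nonneg by simp
  have pointwise: "\<epsilon> * norm (\<gamma>'' s) \<le> - (\<gamma>'' s \<bullet> \<gamma> s)" if s: "s \<in> {0..L}" for s
  proof -
    have "\<epsilon> * norm (\<gamma>'' s) + \<gamma>'' s \<bullet> \<gamma> s \<le> 0"
    proof (rule continuous_le_on_closure[where S="{0<..<L}" and x=s and a=0
        and f="\<lambda>s. \<epsilon> * norm (\<gamma>'' s) + \<gamma>'' s \<bullet> \<gamma> s"])
      show "continuous_on (closure {0<..<L}) (\<lambda>s. \<epsilon> * norm (\<gamma>'' s) + \<gamma>'' s \<bullet> \<gamma> s)"
        using L by (auto intro!: continuous_intros \<gamma>''_cont \<gamma>_cont)
      show "s \<in> closure {0<..<L}" using s L by simp
    qed (use curvature_le_radial in force)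
    then show ?thesis by simp
  qed
  have "((\<lambda>s. \<gamma>' s \<bullet> \<gamma> s) has_vector_derivative \<gamma>' s \<bullet> \<gamma>' s + \<gamma>'' s \<bullet> \<gamma> s) (at s within {0..L})"
    if "s \<in> {0..L}" for s
    using bounded_bilinear.has_vector_derivative[OF bounded_bilinear_inner \<gamma>'_deriv[OF that] \<gamma>_deriv[OF that]]
    by simp
  then have "((\<lambda>s. \<gamma>' s \<bullet> \<gamma>' s + \<gamma>'' s \<bullet> \<gamma> s) has_integral (\<gamma>' L \<bullet> \<gamma> L - \<gamma>' 0 \<bullet> \<gamma> 0)) {0..L}"
    by (rule fundamental_theorem_of_calculus[OF length_nonneg])
  then have "((\<lambda>s. 1 + \<gamma>'' s \<bullet> \<gamma> s) has_integral (\<gamma>' L \<bullet> \<gamma> L - \<gamma>' 0 \<bullet> \<gamma> 0)) {0..L}"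
    by (rule has_integral_eq[rotated]) (simp add: unit_speed flip: norm_eq_1)
  from has_integral_diff[OF has_integral_const_real[of 1 0 L] this]
  have radial: "((\<lambda>s. - (\<gamma>'' s \<bullet> \<gamma> s)) has_integral (L - (\<gamma>' L \<bullet> \<gamma> L - \<gamma>' 0 \<bullet> \<gamma> 0))) {0..L}"
    using length_nonneg by simp
  have "(\<lambda>s. norm (\<gamma>'' s)) integrable_on {0..L}"
    by (intro integrable_continuous_interval continuous_intros \<gamma>''_cont)
  then have "((\<lambda>s. \<epsilon> * norm (\<gamma>'' s)) has_integral \<epsilon> * integral {0..L} (\<lambda>s. norm (\<gamma>'' s))) {0..L}"
    by (intro has_integral_mult_right) auto
  then have "\<epsilon> * integral {0..L} (\<lambda>s. norm (\<gamma>'' s)) \<le> L - (\<gamma>' L \<bullet> \<gamma> L - \<gamma>' 0 \<bullet> \<gamma> 0)"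
    by (rule has_integral_le[OF _ radial]) (use pointwise in auto)
  moreover have "\<bar>\<gamma>' t \<bullet> \<gamma> t\<bar> \<le> 1" if "t \<in> {0..L}" for t
    using Cauchy_Schwarz_ineq2[of "\<gamma>' t" "\<gamma> t"] unit_speed[OF that] norm_\<gamma>_le_1[OF that] by simp
  then have "\<bar>\<gamma>' 0 \<bullet> \<gamma> 0\<bar> \<le> 1" "\<bar>\<gamma>' L \<bullet> \<gamma> L\<bar> \<le> 1" using length_nonneg by auto
  ultimately show ?thesis by (simp add: abs_le_iff)
qed simp

end

theorem mainTheorem18:
  shows "\<exists>C :: real \<Rightarrow> real. (\<forall>\<epsilon>\<in>{0<..1}. C \<epsilon> > 0) \<and>
    (\<forall>\<epsilon> (K :: (real^3) set) \<Sigma> (\<gamma> :: real \<Rightarrow> real^3) \<gamma>' \<gamma>'' L.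
       0 < \<epsilon> \<and> \<epsilon> \<le> 1 \<and> convex K \<and> ball 0 \<epsilon> \<subseteq> K \<and> K \<subseteq> ball 0 1 \<and>
       \<Sigma> = frontier K \<and> smooth_surface \<Sigma> \<and>
       0 \<le> L \<and> \<gamma> ` {0..L} \<subseteq> \<Sigma> \<and>
       (\<forall>s\<in>{0..L}. (\<gamma> has_vector_derivative \<gamma>' s) (at s within {0..L}) \<and>
                    (\<gamma>' has_vector_derivative \<gamma>'' s) (at s within {0..L}) \<and>
                    norm (\<gamma>' s) = 1) \<and>
       continuous_on {0..L} \<gamma>'' \<and>
       curve_length \<gamma> 0 L = intrinsic_dist \<Sigma> (\<gamma> 0) (\<gamma> L)
       \<longrightarrow> integral {0..L} (\<lambda>s. norm (\<gamma>'' s)) \<le> C \<epsilon>)"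
proof (intro exI[of _ "\<lambda>\<epsilon>. 56 / \<epsilon>"] conjI ballI allI impI, goal_cases)
  case (1 \<epsilon>)
  then show ?case by simp
next
  case (2 \<epsilon> K \<Sigma> \<gamma> \<gamma>' \<gamma>'' L)
  then interpret shortest_path \<epsilon> K \<gamma> \<gamma>' \<gamma>'' L
    by unfold_locales auto
  have "\<epsilon> * integral {0..L} (\<lambda>s. norm (\<gamma>'' s)) \<le> 56"
    using total_curvature_le length_le_54 by linarith
  then show ?case using eps_pos by (simp add: field_simps)
qed

end
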